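(* Let $\{\xi_{n,i}\}_{n,i\ge 1}$ and $\{\eta_n\}_{n\ge1}$ be two independent i.i.d. families of nonnegative integer-valued random variables with generic copies $\xi$ and $\eta$, where $P(\eta=0)<1$, and define $X_0=0$, $X_n=\sum_{i=1}^{X_{n-1}}\xi_{n,i}+\eta_n$ for $n\ge1$, and $S_n=X_1+\cdots+X_n$. Let $\alpha=E\xi$. Assume $0<\alpha<1$; $P(\eta>x)=x^{-\kappa}L(x)$ for some $\kappa>0$ and slowly varying $L$; and, if $\kappa\ge1$, that $E(\xi^{\kappa+\delta})<\infty$ for some $\delta>0$. Then for every $n\ge1$, $$\lim_{x\to\infty}\frac{P(S_n>x)}{P(\eta>x)}=\sum_{i=1}^{n}\Big(\sum_{m=0}^{i-1}\alpha^m\Big)^{\kappa}.$$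
   Context: A function $L$ is slowly varying if $L(tx)/L(x)\to1$ as $x\to\infty$ for all $t>0$. *)

theory Defs
  imports "HOL-Probability.Probability"
begin

definition slowly_varying :: "(real \<Rightarrow> real) \<Rightarrow> bool" where
  "slowly_varying L \<longleftrightarrow> (\<forall>t>0. ((\<lambda>x. L (t * x) / L x) \<longlongrightarrow> 1) at_top)"

fun bpi :: "(nat \<Rightarrow> nat \<Rightarrow> 'a \<Rightarrow> nat) \<Rightarrow> (nat \<Rightarrow> 'a \<Rightarrow> nat) \<Rightarrow> nat \<Rightarrow> 'a \<Rightarrow> nat" where
  "bpi \<xi> \<eta> 0 \<omega> = 0"
| "bpi \<xi> \<eta> (Suc n) \<omega> = (\<Sum>i=1..bpi \<xi> \<eta> n \<omega>. \<xi> (Suc n) i \<omega>) + \<eta> (Suc n) \<omega>"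

definition bpi_sum :: "(nat \<Rightarrow> nat \<Rightarrow> 'a \<Rightarrow> nat) \<Rightarrow> (nat \<Rightarrow> 'a \<Rightarrow> nat) \<Rightarrow> nat \<Rightarrow> 'a \<Rightarrow> nat" where
  "bpi_sum \<xi> \<eta> n \<omega> = (\<Sum>k=1..n. bpi \<xi> \<eta> k \<omega>)"

end

theory Submission
  imports Defs
begin

(* Write T(x) = P(\<eta> > x). By induction on n one proves, more generally, that for nonnegative
   weights w the tail of w_1 X_1 + ... + w_n X_n is asymptotic to
   \<Sum>_k (\<Sum>_{j=k..n} w_j \<alpha>^(j-k))^\<kappa> T(x).
   Since X_{n+1} = \<alpha> X_n + \<eta>_{n+1} + D_n, where D_n is the sum of the X_n offspring counts of
   generation n+1 minus \<alpha> X_n, a weighted sum of length n+1 is a weighted sum of length n (the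
   weight of X_n raised by \<alpha> w_{n+1}), plus the independent term w_{n+1} \<eta>_{n+1}, plus the error
   w_{n+1} D_n. Tail constants of independent nonnegative summands add up, and the error is
   negligible: given X_n = k, D_n is a centred sum of k i.i.d. copies of \<xi>. For k \<le> \<delta>x it is
   controlled by Markov's inequality with a moment of order p > \<kappa> together with
   E[X_n^p; X_n \<le> y] = O(y^p T(y)), and for k > \<delta>x by the weak law of large numbers. *)

section \<open>Elementary limits and inequalities\<close>

lemma real_doubling_induct [consumes 2, case_names base double]:
  fixes y0 y :: real
  assumes "0 < y0" "y0 \<le> y"
    and base: "\<And>y. y0 \<le> y \<Longrightarrow> y < 2 * y0 \<Longrightarrow> P y"
    and double: "\<And>y. 2 * y0 \<le> y \<Longrightarrow> P (y / 2) \<Longrightarrow> P y"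
  shows "P y"
proof -
  have below: "\<forall>y. y0 \<le> y \<and> y < 2 ^ Suc j * y0 \<longrightarrow> P y" for j
  proof (induction j)
    case 0
    then show ?case using base by auto
  next
    case (Suc j)
    show ?case
    proof (intro allI impI)
      fix y assume y: "y0 \<le> y \<and> y < 2 ^ Suc (Suc j) * y0"
      show "P y"
      proof (cases "y < 2 * y0")
        case False
        then have "P (y / 2)" using Suc y by auto
        then show ?thesis using double False by (simp add: not_less)
      qed (use base y in auto)
    qed
  qed
  obtain j where "y / y0 < 2 ^ j"
    using real_arch_pow[of 2 "y / y0"] by auto
  then have "y < 2 ^ j * y0"
    using \<open>0 < y0\<close> by (simp add: field_simps)
  also have "\<dots> \<le> 2 ^ Suc j * y0"
    using \<open>0 < y0\<close> by simp
  finally have "y < 2 ^ Suc j * y0" .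
  then show ?thesis using below \<open>y0 \<le> y\<close> by blast
qed

lemma tendsto_sandwich_approx:
  fixes h u d :: "real \<Rightarrow> real"
  assumes bounds: "\<And>\<epsilon>. 0 < \<epsilon> \<Longrightarrow> \<epsilon> < 1 \<Longrightarrow> \<exists>U D. (U \<longlongrightarrow> u \<epsilon>) at_top \<and> (D \<longlongrightarrow> d \<epsilon>) at_top
            \<and> eventually (\<lambda>x. D x \<le> h x \<and> h x \<le> U x) at_top"
    and u: "(u \<longlongrightarrow> A) (at_right 0)" and d: "(d \<longlongrightarrow> A) (at_right 0)"
  shows "(h \<longlongrightarrow> A) at_top"
proof (rule tendstoI)
  fix e :: real assume "0 < e"
  have "eventually (\<lambda>\<epsilon>. \<epsilon> < 1) (at_right (0::real))"
    unfolding eventually_at_right_field by (intro exI[of _ 1]) auto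
  then have small: "eventually (\<lambda>\<epsilon>. dist (u \<epsilon>) A < e/2 \<and> dist (d \<epsilon>) A < e/2 \<and> \<epsilon> < 1) (at_right (0::real))"
    using tendstoD[OF u, of "e/2"] tendstoD[OF d, of "e/2"] \<open>0 < e\<close>
    by (auto simp: eventually_conj_iff)
  then obtain \<epsilon> where \<epsilon>: "0 < \<epsilon>" "\<epsilon> < 1" "dist (u \<epsilon>) A < e/2" "dist (d \<epsilon>) A < e/2"
  proof -
    from small obtain b where "0 < b"
      and b: "\<forall>\<epsilon>>0. \<epsilon> < b \<longrightarrow> dist (u \<epsilon>) A < e/2 \<and> dist (d \<epsilon>) A < e/2 \<and> \<epsilon> < 1"
      unfolding eventually_at_right_field by auto
    then have "dist (u (b/2)) A < e/2 \<and> dist (d (b/2)) A < e/2 \<and> b/2 < 1"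
      using b[rule_format, of "b/2"] by auto
    then show thesis using \<open>0 < b\<close> that[of "b/2"] by auto
  qed
  obtain U D where U: "(U \<longlongrightarrow> u \<epsilon>) at_top" and D: "(D \<longlongrightarrow> d \<epsilon>) at_top"
    and between: "eventually (\<lambda>x. D x \<le> h x \<and> h x \<le> U x) at_top"
    using bounds[OF \<epsilon>(1,2)] by blast
  have "eventually (\<lambda>x. dist (U x) (u \<epsilon>) < e/2 \<and> dist (D x) (d \<epsilon>) < e/2) at_top"
    using tendstoD[OF U, of "e/2"] tendstoD[OF D, of "e/2"] \<open>0 < e\<close> by (auto simp: eventually_conj_iff)
  with between show "eventually (\<lambda>x. dist (h x) A < e) at_top"
    by eventually_elim (insert \<epsilon>, unfold dist_real_def abs_less_iff, linarith)
qed

lemma powr_sum_le_card_powr_sum_powr: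
  fixes a :: "'i \<Rightarrow> real"
  assumes "finite I" "1 \<le> p" "\<And>i. i \<in> I \<Longrightarrow> 0 \<le> a i"
  shows "(\<Sum>i\<in>I. a i) powr p \<le> real (card I) powr (p - 1) * (\<Sum>i\<in>I. a i powr p)"
proof -
  define I' where "I' = {i\<in>I. a i > 0}"
  have fin: "finite I'" using assms(1) by (simp add: I'_def)
  have s1: "(\<Sum>i\<in>I. a i) = (\<Sum>i\<in>I'. a i)"
    unfolding I'_def using assms by (intro sum.mono_neutral_right) force+
  have s2: "(\<Sum>i\<in>I. a i powr p) = (\<Sum>i\<in>I'. a i powr p)"
    unfolding I'_def using assms by (intro sum.mono_neutral_right) force+
  have nn: "0 \<le> (\<Sum>i\<in>I'. a i powr p)" by (intro sum_nonneg) auto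
  show ?thesis
  proof (cases "I' = {}")
    case True
    then show ?thesis using s1 s2 by simp
  next
    case False
    let ?c = "real (card I')"
    have c: "?c > 0" using False fin by (simp add: card_gt_0_iff)
    have "(\<Sum>i\<in>I'. (1 / ?c) *\<^sub>R a i) powr p \<le> (\<Sum>i\<in>I'. (1 / ?c) * a i powr p)"
      by (rule convex_on_sum[OF fin False powr_convex[OF assms(2)]]) (use c in \<open>auto simp: I'_def\<close>)
    then have "((\<Sum>i\<in>I'. a i) / ?c) powr p \<le> (\<Sum>i\<in>I'. a i powr p) / ?c"
      by (simp add: sum_distrib_right[symmetric] sum_distrib_left[symmetric] divide_inverse mult.commute)
    then have "(\<Sum>i\<in>I'. a i) powr p \<le> ?c powr p / ?c * (\<Sum>i\<in>I'. a i powr p)"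
      using c by (simp add: powr_divide sum_nonneg I'_def field_simps)
    also have "?c powr p / ?c = ?c powr (p - 1)" using c by (simp add: powr_diff)
    also have "?c powr (p - 1) \<le> real (card I) powr (p - 1)"
      using c assms(2) card_mono[OF assms(1), of I'] by (intro powr_mono2) (auto simp: I'_def)
    finally show ?thesis using s1 s2 nn by (metis mult_right_mono order_trans)
  qed
qed

lemma slowly_varying_powr_mult_scaling:
  assumes L: "slowly_varying L" and f: "\<And>x. 0 < x \<Longrightarrow> f x = x powr -\<kappa> * L x" and "0 < c"
  shows "((\<lambda>x. f (c * x) / f x) \<longlongrightarrow> c powr -\<kappa>) at_top"
proof -
  have "((\<lambda>x. c powr -\<kappa> * (L (c * x) / L x)) \<longlongrightarrow> c powr -\<kappa>) at_top"
    using tendsto_mult[OF tendsto_const, of "\<lambda>x. L (c * x) / L x" 1 at_top "c powr -\<kappa>"] L \<open>0 < c\<close>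
    unfolding slowly_varying_def by auto
  moreover have "eventually (\<lambda>x. c powr -\<kappa> * (L (c * x) / L x) = f (c * x) / f x) at_top"
    using eventually_gt_at_top[of 0]
  proof eventually_elim
    case (elim x)
    then have "f (c * x) = c powr -\<kappa> * x powr -\<kappa> * L (c * x)" "f x = x powr -\<kappa> * L x"
      using f[of "c * x"] f[of x] \<open>0 < c\<close> by (auto simp: powr_mult)
    then show ?case using elim by (simp add: field_simps)
  qed
  ultimately show ?thesis by (rule Lim_transform_eventually)
qed

section \<open>Tails, moments and the weak law of large numbers\<close>

context prob_space
begin

abbreviation upper_tail :: "('a \<Rightarrow> real) \<Rightarrow> real \<Rightarrow> real" where
  "upper_tail Y x \<equiv> prob {\<omega> \<in> space M. x < Y \<omega>}"

lemma upper_tail_antimono: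
  assumes "Y \<in> borel_measurable M" "x \<le> y"
  shows "upper_tail Y y \<le> upper_tail Y x"
  using assms by (intro finite_measure_mono) auto

lemma upper_tail_tendsto_0:
  assumes [measurable]: "Y \<in> borel_measurable M"
  shows "(upper_tail Y \<longlongrightarrow> 0) at_top"
proof -
  interpret D: real_distribution "distr M borel Y" by simp
  have "upper_tail Y x = 1 - cdf (distr M borel Y) x" for x
  proof -
    have "{\<omega> \<in> space M. x < Y \<omega>} = space M - {\<omega> \<in> space M. Y \<omega> \<le> x}" by auto
    moreover have "cdf (distr M borel Y) x = prob {\<omega> \<in> space M. Y \<omega> \<le> x}"
      unfolding cdf_def by (subst measure_distr) (auto intro: arg_cong[where f = prob])
    ultimately show ?thesis by (simp add: prob_compl)
  qed
  then show ?thesis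
    using tendsto_diff[OF tendsto_const D.cdf_lim_at_top_prob, of 1] by simp
qed

lemma prob_subset_Un_le:
  "A \<subseteq> B \<union> C \<Longrightarrow> B \<in> events \<Longrightarrow> C \<in> events \<Longrightarrow> prob A \<le> prob B + prob C"
  by (meson finite_measure_mono measure_Un_le order_trans sets.Un)

lemma sum_prob_eq_prob_in:
  fixes N :: "'a \<Rightarrow> nat"
  assumes [measurable]: "N \<in> measurable M (count_space UNIV)" and "finite S"
  shows "(\<Sum>m\<in>S. prob {\<omega> \<in> space M. N \<omega> = m}) = prob {\<omega> \<in> space M. N \<omega> \<in> S}"
proof -
  have "prob (\<Union>m\<in>S. {\<omega> \<in> space M. N \<omega> = m}) = (\<Sum>m\<in>S. prob {\<omega> \<in> space M. N \<omega> = m})"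
    using assms(2) by (intro measure_finite_Union) (auto simp: disjoint_family_on_def)
  moreover have "(\<Union>m\<in>S. {\<omega> \<in> space M. N \<omega> = m}) = {\<omega> \<in> space M. N \<omega> \<in> S}" by auto
  ultimately show ?thesis by simp
qed

lemma indep_var_prob_conj:
  fixes V W :: "'a \<Rightarrow> real"
  assumes "indep_var borel V borel W" "A \<in> sets borel" "B \<in> sets borel"
  shows "prob {\<omega> \<in> space M. V \<omega> \<in> A \<and> W \<omega> \<in> B}
    = prob {\<omega> \<in> space M. V \<omega> \<in> A} * prob {\<omega> \<in> space M. W \<omega> \<in> B}"
proof -
  have "(\<lambda>\<omega>. (V \<omega>, W \<omega>)) -` (A \<times> B) \<inter> space M = {\<omega> \<in> space M. V \<omega> \<in> A \<and> W \<omega> \<in> B}"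
    "V -` A \<inter> space M = {\<omega> \<in> space M. V \<omega> \<in> A}" "W -` B \<inter> space M = {\<omega> \<in> space M. W \<omega> \<in> B}"
    by auto
  then show ?thesis using indep_varD[OF assms] by simp
qed

lemma upper_tail_add_le:
  fixes V W :: "'a \<Rightarrow> real"
  assumes [measurable]: "V \<in> borel_measurable M" "W \<in> borel_measurable M"
    and "indep_var borel V borel W"
  shows "upper_tail (\<lambda>\<omega>. V \<omega> + W \<omega>) x
    \<le> upper_tail V ((1 - \<epsilon>) * x) + upper_tail W ((1 - \<epsilon>) * x) + upper_tail V (\<epsilon> * x) * upper_tail W (\<epsilon> * x)"
proof -
  have conj: "prob {\<omega> \<in> space M. V \<omega> \<in> {\<epsilon> * x<..} \<and> W \<omega> \<in> {\<epsilon> * x<..}}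
      = upper_tail V (\<epsilon> * x) * upper_tail W (\<epsilon> * x)"
    using indep_var_prob_conj[OF assms(3), of "{\<epsilon> * x<..}" "{\<epsilon> * x<..}"] by simp
  have "upper_tail (\<lambda>\<omega>. V \<omega> + W \<omega>) x
      \<le> prob ({\<omega> \<in> space M. (1 - \<epsilon>) * x < V \<omega>} \<union> {\<omega> \<in> space M. (1 - \<epsilon>) * x < W \<omega>})
        + prob {\<omega> \<in> space M. V \<omega> \<in> {\<epsilon> * x<..} \<and> W \<omega> \<in> {\<epsilon> * x<..}}"
    by (rule prob_subset_Un_le) (auto simp: algebra_simps)
  also have "\<dots> \<le> upper_tail V ((1 - \<epsilon>) * x) + upper_tail W ((1 - \<epsilon>) * x) + upper_tail V (\<epsilon> * x) * upper_tail W (\<epsilon> * x)"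
    unfolding conj by (intro add_right_mono measure_Un_le) auto
  finally show ?thesis .
qed

lemma upper_tail_add_ge:
  fixes V W :: "'a \<Rightarrow> real"
  assumes [measurable]: "V \<in> borel_measurable M" "W \<in> borel_measurable M"
    and "indep_var borel V borel W" and "\<And>\<omega>. 0 \<le> V \<omega>" "\<And>\<omega>. 0 \<le> W \<omega>"
  shows "upper_tail V x + upper_tail W x - upper_tail V x * upper_tail W x \<le> upper_tail (\<lambda>\<omega>. V \<omega> + W \<omega>) x"
proof -
  have "prob ({\<omega> \<in> space M. x < V \<omega>} \<union> {\<omega> \<in> space M. x < W \<omega>})
      = upper_tail V x + upper_tail W x - prob ({\<omega> \<in> space M. x < V \<omega>} \<inter> {\<omega> \<in> space M. x < W \<omega>})"
    by (intro measure_Un3) (auto simp: fmeasurable_def less_top[symmetric])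
  also have "{\<omega> \<in> space M. x < V \<omega>} \<inter> {\<omega> \<in> space M. x < W \<omega>} = {\<omega> \<in> space M. V \<omega> \<in> {x<..} \<and> W \<omega> \<in> {x<..}}"
    by auto
  also have "prob \<dots> = upper_tail V x * upper_tail W x"
    using indep_var_prob_conj[OF assms(3), of "{x<..}" "{x<..}"] by simp
  finally have "upper_tail V x + upper_tail W x - upper_tail V x * upper_tail W x
      = prob ({\<omega> \<in> space M. x < V \<omega>} \<union> {\<omega> \<in> space M. x < W \<omega>})" by simp
  also have "\<dots> \<le> upper_tail (\<lambda>\<omega>. V \<omega> + W \<omega>) x"
  proof (rule finite_measure_mono)
    show "{\<omega> \<in> space M. x < V \<omega>} \<union> {\<omega> \<in> space M. x < W \<omega>} \<subseteq> {\<omega> \<in> space M. x < V \<omega> + W \<omega>}"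
      using assms(4,5) by (auto intro: order.strict_trans2[OF _ add_increasing] order.strict_trans2[OF _ add_increasing2])
  qed measurable
  finally show ?thesis .
qed

lemma moment_exponent_exists:
  fixes X :: "'a \<Rightarrow> real"
  assumes "integrable M X" "\<And>\<omega>. 0 \<le> X \<omega>"
    and "1 \<le> \<kappa> \<Longrightarrow> \<exists>\<delta>>0. integrable M (\<lambda>\<omega>. X \<omega> powr (\<kappa> + \<delta>))"
  obtains p where "\<kappa> < p" "1 \<le> p" "integrable M (\<lambda>\<omega>. X \<omega> powr p)"
proof (cases "\<kappa> < 1")
  case True
  have "(\<lambda>\<omega>. X \<omega> powr 1) = X" using assms(2) by (simp add: fun_eq_iff)
  then show ?thesis using that[of 1] True assms(1) by simp
next
  case False
  with assms(3) obtain \<delta> where "0 < \<delta>" "integrable M (\<lambda>\<omega>. X \<omega> powr (\<kappa> + \<delta>))" by auto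
  then show ?thesis using that[of "\<kappa> + \<delta>"] False by simp
qed

lemma prob_sum_greater_le_moment:
  fixes Y :: "'i \<Rightarrow> 'a \<Rightarrow> real"
  assumes "finite I" "1 \<le> p" "0 < y"
    and [measurable]: "\<And>i. i \<in> I \<Longrightarrow> Y i \<in> borel_measurable M"
    and nonneg: "\<And>i \<omega>. i \<in> I \<Longrightarrow> 0 \<le> Y i \<omega>"
    and int: "\<And>i. i \<in> I \<Longrightarrow> integrable M (\<lambda>\<omega>. Y i \<omega> powr p)"
  shows "upper_tail (\<lambda>\<omega>. \<Sum>i\<in>I. Y i \<omega>) y
    \<le> real (card I) powr (p - 1) * (\<Sum>i\<in>I. expectation (\<lambda>\<omega>. Y i \<omega> powr p)) / y powr p"
proof (cases "I = {}")
  case False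
  define S where "S \<omega> = (\<Sum>i\<in>I. Y i \<omega> powr p)" for \<omega>
  define c where "c = y powr p / real (card I) powr (p - 1)"
  have "{\<omega> \<in> space M. y < (\<Sum>i\<in>I. Y i \<omega>)} \<subseteq> {\<omega> \<in> space M. c \<le> S \<omega>}"
  proof safe
    fix \<omega> assume \<omega>: "\<omega> \<in> space M" and gt: "y < (\<Sum>i\<in>I. Y i \<omega>)"
    have card: "real (card I) > 0" using \<open>finite I\<close> False by (simp add: card_gt_0_iff)
    have "y powr p < (\<Sum>i\<in>I. Y i \<omega>) powr p"
      using gt \<open>0 < y\<close> \<open>1 \<le> p\<close> by (intro powr_less_mono2) auto
    also have "\<dots> \<le> real (card I) powr (p - 1) * S \<omega>"
      unfolding S_def using assms by (intro powr_sum_le_card_powr_sum_powr) auto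
    finally show "c \<le> S \<omega>" unfolding c_def using card by (simp add: field_simps)
  qed
  then have "upper_tail (\<lambda>\<omega>. \<Sum>i\<in>I. Y i \<omega>) y \<le> prob {\<omega> \<in> space M. c \<le> S \<omega>}"
    unfolding S_def using int by (intro finite_measure_mono) auto
  also have "\<dots> \<le> expectation S / c"
    using \<open>finite I\<close> \<open>0 < y\<close> False int nonneg unfolding S_def c_def
    by (intro integral_Markov_inequality_measure[where A = "space M"])
      (auto intro!: sum_nonneg AE_I2 simp: card_gt_0_iff)
  also have "expectation S = (\<Sum>i\<in>I. expectation (\<lambda>\<omega>. Y i \<omega> powr p))"
    unfolding S_def using int by (rule Bochner_Integration.integral_sum)
  finally show ?thesis by (simp add: c_def mult_ac)
qed (use \<open>0 < y\<close> in simp)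

lemma
  assumes "distr M N X = distr M N Y" "X \<in> measurable M N" "Y \<in> measurable M N"
    and "f \<in> borel_measurable N"
  shows distr_eq_imp_integrable_iff: "integrable M (\<lambda>\<omega>. f (X \<omega>)) \<longleftrightarrow> integrable M (\<lambda>\<omega>. f (Y \<omega>))"
    and distr_eq_imp_integral_eq: "expectation (\<lambda>\<omega>. f (X \<omega>)) = expectation (\<lambda>\<omega>. (f (Y \<omega>) :: real))"
  using integrable_distr_eq[OF assms(2,4)] integrable_distr_eq[OF assms(3,4)]
    integral_distr[OF assms(2,4)] integral_distr[OF assms(3,4)] assms(1) by simp_all

lemma expectation_excess_tendsto_0:
  fixes Y :: "'a \<Rightarrow> real"
  assumes "integrable M Y"
  shows "(\<lambda>k::nat. expectation (\<lambda>\<omega>. Y \<omega> - min (Y \<omega>) (real k))) \<longlonglongrightarrow> 0"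
proof -
  have [measurable]: "Y \<in> borel_measurable M" using assms by simp
  have "(\<lambda>k::nat. expectation (\<lambda>\<omega>. Y \<omega> - min (Y \<omega>) (real k))) \<longlonglongrightarrow> expectation (\<lambda>\<omega>. 0)"
  proof (rule integral_dominated_convergence[where w = "\<lambda>\<omega>. norm (Y \<omega>)"])
    show "AE \<omega> in M. (\<lambda>k. Y \<omega> - min (Y \<omega>) (real k)) \<longlonglongrightarrow> 0"
    proof (rule AE_I2)
      fix \<omega>
      obtain k0 :: nat where k0: "Y \<omega> \<le> real k0" using real_arch_simple by blast
      have "eventually (\<lambda>k::nat. Y \<omega> - min (Y \<omega>) (real k) = 0) sequentially"
        using eventually_ge_at_top[of k0] by eventually_elim (use k0 in auto)
      then show "(\<lambda>k. Y \<omega> - min (Y \<omega>) (real k)) \<longlonglongrightarrow> 0" by (rule tendsto_eventually)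
    qed
    show "AE \<omega> in M. norm (Y \<omega> - min (Y \<omega>) (real k)) \<le> norm (Y \<omega>)" for k :: nat
      by (rule AE_I2) (auto simp: min_def)
  qed (use assms in auto)
  then show ?thesis by simp
qed

lemma prob_truncated_sum_deviation_le:
  fixes X :: "'i \<Rightarrow> 'a \<Rightarrow> real"
  assumes indep: "indep_vars (\<lambda>_. borel) X I"
    and distr: "\<And>i. i \<in> I \<Longrightarrow> distr M borel (X i) = distr M borel Y"
    and [measurable]: "Y \<in> borel_measurable M" and nonneg: "\<And>\<omega>. 0 \<le> Y \<omega>"
    and J: "finite J" "J \<noteq> {}" "J \<subseteq> I" and "0 < K" "0 \<le> t"
  shows "prob {\<omega> \<in> space M. t \<le> \<bar>(\<Sum>i\<in>J. min (X i \<omega>) K) - real (card J) * expectation (\<lambda>\<omega>. min (Y \<omega>) K)\<bar>}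
    \<le> 2 * exp (-2 * t\<^sup>2 / (real (card J) * K\<^sup>2))"
proof -
  define Xt where "Xt = (\<lambda>i \<omega>. min (X i \<omega>) K)"
  define Yt where "Yt = (\<lambda>\<omega>. min (Y \<omega>) K)"
  have [measurable]: "X i \<in> borel_measurable M" if "i \<in> I" for i
    using indep that unfolding indep_vars_def by blast
  interpret H: Hoeffding_ineq_iid M J Xt Yt 0 K "expectation Yt"
  proof unfold_locales
    show "indep_vars (\<lambda>_. borel) Xt J"
      unfolding Xt_def using indep_vars_subset[OF indep J(3)] by (rule indep_vars_compose2) measurable
    show "distr M borel (Xt i) = distr M borel Yt" if "i \<in> J" for i
    proof -
      have "i \<in> I" using that J by auto
      have "distr M borel (Xt i) = distr (distr M borel (X i)) borel (\<lambda>y. min y K)"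
        using \<open>i \<in> I\<close> by (subst distr_distr) (auto simp: Xt_def o_def)
      also have "\<dots> = distr (distr M borel Y) borel (\<lambda>y. min y K)"
        using distr[OF \<open>i \<in> I\<close>] by simp
      also have "\<dots> = distr M borel Yt"
        by (subst distr_distr) (auto simp: Yt_def o_def)
      finally show ?thesis .
    qed
    show "random_variable borel Yt" unfolding Yt_def by measurable
    show "AE \<omega> in M. Yt \<omega> \<in> {0..K}" using nonneg \<open>0 < K\<close> by (auto simp: Yt_def)
  qed (use J in auto)
  show ?thesis
    using H.Hoeffding_ineq_abs_ge[OF \<open>0 \<le> t\<close> \<open>0 < K\<close> J(2)] by (simp add: Xt_def Yt_def)
qed

lemma prob_sum_excess_ge_le:
  fixes X :: "'i \<Rightarrow> 'a \<Rightarrow> real"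
  assumes distr: "\<And>i. i \<in> J \<Longrightarrow> distr M borel (X i) = distr M borel Y"
    and [measurable]: "\<And>i. i \<in> J \<Longrightarrow> X i \<in> borel_measurable M"
    and int_Y: "integrable M Y" and "finite J" "0 < s"
  shows "prob {\<omega> \<in> space M. s \<le> (\<Sum>i\<in>J. X i \<omega> - min (X i \<omega>) K)}
    \<le> real (card J) * expectation (\<lambda>\<omega>. Y \<omega> - min (Y \<omega>) K) / s"
proof -
  have [measurable]: "Y \<in> borel_measurable M" using int_Y by simp
  have "integrable M (\<lambda>\<omega>. Y \<omega> - min (Y \<omega>) K)"
    using int_Y by (intro Bochner_Integration.integrable_diff Bochner_Integration.integrable_min) auto
  then have int: "integrable M (\<lambda>\<omega>. X i \<omega> - min (X i \<omega>) K)"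
    and exp: "expectation (\<lambda>\<omega>. X i \<omega> - min (X i \<omega>) K) = expectation (\<lambda>\<omega>. Y \<omega> - min (Y \<omega>) K)"
    if "i \<in> J" for i
    using distr_eq_imp_integrable_iff[OF distr[OF that], of "\<lambda>y. y - min y K"]
      distr_eq_imp_integral_eq[OF distr[OF that], of "\<lambda>y. y - min y K"] that by auto
  have "prob {\<omega> \<in> space M. s \<le> (\<Sum>i\<in>J. X i \<omega> - min (X i \<omega>) K)}
      \<le> expectation (\<lambda>\<omega>. \<Sum>i\<in>J. X i \<omega> - min (X i \<omega>) K) / s"
    using int \<open>0 < s\<close>
    by (intro integral_Markov_inequality_measure[where A = "space M"]) (auto intro!: sum_nonneg AE_I2)
  also have "expectation (\<lambda>\<omega>. \<Sum>i\<in>J. X i \<omega> - min (X i \<omega>) K) = real (card J) * expectation (\<lambda>\<omega>. Y \<omega> - min (Y \<omega>) K)"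
    using int exp by (simp add: Bochner_Integration.integral_sum)
  finally show ?thesis .
qed

lemma prob_sum_deviation_le:
  fixes X :: "'i \<Rightarrow> 'a \<Rightarrow> real"
  assumes indep: "indep_vars (\<lambda>_. borel) X I"
    and distr: "\<And>i. i \<in> I \<Longrightarrow> distr M borel (X i) = distr M borel Y"
    and int_Y: "integrable M Y" and nonneg: "\<And>\<omega>. 0 \<le> Y \<omega>"
    and J: "finite J" "J \<noteq> {}" "J \<subseteq> I" and "0 < K" "0 < \<theta>"
    and excess: "expectation (\<lambda>\<omega>. Y \<omega> - min (Y \<omega>) K) \<le> \<theta> / 4"
  shows "prob {\<omega> \<in> space M. \<theta> * real (card J) < \<bar>(\<Sum>i\<in>J. X i \<omega>) - real (card J) * expectation Y\<bar>}
    \<le> 2 * exp (- (\<theta>\<^sup>2 / (2 * K\<^sup>2) * real (card J))) + 4 * expectation (\<lambda>\<omega>. Y \<omega> - min (Y \<omega>) K) / \<theta>"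
proof -
  have [measurable]: "Y \<in> borel_measurable M" using int_Y by simp
  have [measurable]: "X i \<in> borel_measurable M" if "i \<in> I" for i
    using indep that unfolding indep_vars_def by blast
  define m where "m = real (card J)"
  have "0 < m" using J by (simp add: m_def card_gt_0_iff)
  define r where "r = expectation (\<lambda>\<omega>. Y \<omega> - min (Y \<omega>) K)"
  define \<mu> where "\<mu> = expectation (\<lambda>\<omega>. min (Y \<omega>) K)"
  have "r = expectation Y - \<mu>"
    unfolding r_def \<mu>_def using int_Y
    by (intro Bochner_Integration.integral_diff Bochner_Integration.integrable_min) auto
  have "0 \<le> r" unfolding r_def by (intro integral_nonneg_AE) auto
  define Sy where "Sy \<omega> = (\<Sum>i\<in>J. min (X i \<omega>) K)" for \<omega>
  define Sr where "Sr \<omega> = (\<Sum>i\<in>J. X i \<omega> - min (X i \<omega>) K)" for \<omega>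
  have [measurable]: "Sy \<in> borel_measurable M" "Sr \<in> borel_measurable M"
    unfolding Sy_def Sr_def using J by (auto intro!: borel_measurable_sum)
  have "{\<omega> \<in> space M. \<theta> * m < \<bar>(\<Sum>i\<in>J. X i \<omega>) - m * expectation Y\<bar>}
     \<subseteq> {\<omega> \<in> space M. \<theta> * m / 2 \<le> \<bar>Sy \<omega> - m * \<mu>\<bar>} \<union> {\<omega> \<in> space M. \<theta> * m / 4 \<le> Sr \<omega>}"
  proof safe
    fix \<omega> assume "\<theta> * m < \<bar>(\<Sum>i\<in>J. X i \<omega>) - m * expectation Y\<bar>" "\<not> \<theta> * m / 4 \<le> Sr \<omega>"
    moreover have "(\<Sum>i\<in>J. X i \<omega>) - m * expectation Y = (Sy \<omega> - m * \<mu>) + (Sr \<omega> - m * r)"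
      unfolding Sy_def Sr_def \<open>r = expectation Y - \<mu>\<close> by (simp add: sum_subtractf algebra_simps)
    moreover have "0 \<le> Sr \<omega>" unfolding Sr_def by (intro sum_nonneg) auto
    moreover have "m * r \<le> \<theta> * m / 4" using excess \<open>0 < m\<close> by (simp add: r_def)
    moreover have "0 \<le> m * r" using \<open>0 \<le> r\<close> \<open>0 < m\<close> by simp
    ultimately show "\<theta> * m / 2 \<le> \<bar>Sy \<omega> - m * \<mu>\<bar>" by arith
  qed
  then have "prob {\<omega> \<in> space M. \<theta> * m < \<bar>(\<Sum>i\<in>J. X i \<omega>) - m * expectation Y\<bar>}
      \<le> prob {\<omega> \<in> space M. \<theta> * m / 2 \<le> \<bar>Sy \<omega> - m * \<mu>\<bar>} + prob {\<omega> \<in> space M. \<theta> * m / 4 \<le> Sr \<omega>}"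
    by (rule prob_subset_Un_le) measurable
  also have "prob {\<omega> \<in> space M. \<theta> * m / 2 \<le> \<bar>Sy \<omega> - m * \<mu>\<bar>} \<le> 2 * exp (-2 * (\<theta> * m / 2)\<^sup>2 / (m * K\<^sup>2))"
    unfolding Sy_def \<mu>_def m_def using J \<open>0 < \<theta>\<close> \<open>0 < K\<close>
    by (intro prob_truncated_sum_deviation_le[OF indep distr]) (auto simp: nonneg)
  also have "-2 * (\<theta> * m / 2)\<^sup>2 / (m * K\<^sup>2) = - (\<theta>\<^sup>2 / (2 * K\<^sup>2) * m)"
    using \<open>0 < m\<close> \<open>0 < K\<close> by (simp add: field_simps power2_eq_square)
  also have "prob {\<omega> \<in> space M. \<theta> * m / 4 \<le> Sr \<omega>} \<le> m * r / (\<theta> * m / 4)"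
    unfolding Sr_def r_def using J distr \<open>0 < \<theta>\<close> \<open>0 < m\<close>
    by (unfold m_def, intro prob_sum_excess_ge_le int_Y) auto
  also have "m * r / (\<theta> * m / 4) = 4 * r / \<theta>"
    using \<open>0 < m\<close> by simp
  finally show ?thesis by (simp add: m_def r_def)
qed

theorem weak_law_of_large_numbers:
  fixes X :: "'i \<Rightarrow> 'a \<Rightarrow> real"
  assumes indep: "indep_vars (\<lambda>_. borel) X I"
    and distr: "\<And>i. i \<in> I \<Longrightarrow> distr M borel (X i) = distr M borel Y"
    and int_Y: "integrable M Y" and nonneg: "\<And>\<omega>. 0 \<le> Y \<omega>"
    and "0 < \<theta>" "0 < e"
  shows "\<exists>m0. \<forall>J. finite J \<and> J \<subseteq> I \<and> m0 \<le> card J \<longrightarrow>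
    prob {\<omega> \<in> space M. \<theta> * real (card J) < \<bar>(\<Sum>i\<in>J. X i \<omega>) - real (card J) * expectation Y\<bar>} \<le> e"
proof -
  define r where "r K = expectation (\<lambda>\<omega>. Y \<omega> - min (Y \<omega>) K)" for K :: real
  have "eventually (\<lambda>k::nat. r (real k) < min (\<theta>/4) (\<theta>*e/8) \<and> 1 \<le> k) sequentially"
    using order_tendstoD(2)[OF expectation_excess_tendsto_0[OF int_Y], of "min (\<theta>/4) (\<theta>*e/8)"]
      \<open>0 < \<theta>\<close> \<open>0 < e\<close> eventually_ge_at_top[of 1]
    by (auto simp: eventually_conj_iff r_def)
  then obtain k :: nat where k: "r (real k) < min (\<theta>/4) (\<theta>*e/8)" "1 \<le> k"
    by (auto simp: eventually_sequentially)
  define c where "c = \<theta>\<^sup>2 / (2 * (real k)\<^sup>2)"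
  have "filterlim (\<lambda>m::nat. c * real m) at_top sequentially"
    using \<open>0 < \<theta>\<close> k(2) unfolding c_def
    by (intro filterlim_tendsto_pos_mult_at_top[OF tendsto_const _ filterlim_real_sequentially]) auto
  then have "((\<lambda>m::nat. exp (- (c * real m))) \<longlongrightarrow> 0) sequentially"
    by (intro filterlim_compose[OF exp_at_bot]) (simp add: filterlim_uminus_at_bot)
  then have "eventually (\<lambda>m::nat. exp (- (c * real m)) < e/4) sequentially"
    using \<open>0 < e\<close> by (intro order_tendstoD(2)) auto
  then obtain m0 :: nat where m0: "\<And>m. m0 \<le> m \<Longrightarrow> 2 * exp (- (c * real m)) \<le> e/2"
    unfolding eventually_sequentially by fastforce
  have "prob {\<omega> \<in> space M. \<theta> * real (card J) < \<bar>(\<Sum>i\<in>J. X i \<omega>) - real (card J) * expectation Y\<bar>} \<le> e"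
    if J: "finite J" "J \<subseteq> I" "max m0 1 \<le> card J" for J
  proof -
    have "prob {\<omega> \<in> space M. \<theta> * real (card J) < \<bar>(\<Sum>i\<in>J. X i \<omega>) - real (card J) * expectation Y\<bar>}
        \<le> 2 * exp (- (c * real (card J))) + 4 * r (real k) / \<theta>"
      unfolding c_def r_def using J k \<open>0 < \<theta>\<close>
      by (intro prob_sum_deviation_le[OF indep distr int_Y nonneg]) (auto simp: r_def)
    also have "\<dots> \<le> e/2 + e/2"
      using m0[of "card J"] J k(1) \<open>0 < \<theta>\<close> by (intro add_mono) (auto simp: field_simps)
    finally show ?thesis by simp
  qed
  then show ?thesis by blast
qed

definition truncated_moment :: "('a \<Rightarrow> nat) \<Rightarrow> real \<Rightarrow> real \<Rightarrow> real" where
  "truncated_moment N p y = (\<Sum>m\<in>{0..nat \<lfloor>y\<rfloor>}. prob {\<omega> \<in> space M. N \<omega> = m} * real m powr p)"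

lemma truncated_moment_nonneg: "0 \<le> truncated_moment N p y"
  unfolding truncated_moment_def by (intro sum_nonneg) auto

lemma truncated_moment_mono: "y \<le> y' \<Longrightarrow> truncated_moment N p y \<le> truncated_moment N p y'"
  unfolding truncated_moment_def by (intro sum_mono2) (auto intro: nat_mono floor_mono)

lemma truncated_moment_doubling:
  fixes N :: "'a \<Rightarrow> nat"
  assumes [measurable]: "N \<in> measurable M (count_space UNIV)" and "0 \<le> p" "0 \<le> y"
  shows "truncated_moment N p y \<le> truncated_moment N p (y/2) + y powr p * upper_tail (\<lambda>\<omega>. real (N \<omega>)) (y/2)"
proof -
  define S where "S = {nat \<lfloor>y/2\<rfloor><..nat \<lfloor>y\<rfloor>}"
  have "nat \<lfloor>y/2\<rfloor> \<le> nat \<lfloor>y\<rfloor>" using \<open>0 \<le> y\<close> by (intro nat_mono floor_mono) linarith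
  then have "{0..nat \<lfloor>y\<rfloor>} = {0..nat \<lfloor>y/2\<rfloor>} \<union> S" by (auto simp: S_def)
  then have "truncated_moment N p y
      = truncated_moment N p (y/2) + (\<Sum>m\<in>S. prob {\<omega> \<in> space M. N \<omega> = m} * real m powr p)"
    unfolding truncated_moment_def by (simp only:) (rule sum.union_disjoint, auto simp: S_def)
  also have "(\<Sum>m\<in>S. prob {\<omega> \<in> space M. N \<omega> = m} * real m powr p)
      \<le> (\<Sum>m\<in>S. prob {\<omega> \<in> space M. N \<omega> = m} * y powr p)"
    using \<open>0 \<le> y\<close> \<open>0 \<le> p\<close>
    by (intro sum_mono mult_left_mono powr_mono2) (auto simp: S_def le_nat_iff le_floor_iff)
  also have "\<dots> = y powr p * prob {\<omega> \<in> space M. N \<omega> \<in> S}"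
    using sum_prob_eq_prob_in[OF assms(1), of S] by (simp add: S_def sum_distrib_left[symmetric] mult.commute)
  also have "\<dots> \<le> y powr p * upper_tail (\<lambda>\<omega>. real (N \<omega>)) (y/2)"
    using \<open>0 \<le> y\<close> by (intro mult_left_mono finite_measure_mono) (auto simp: S_def nat_less_iff floor_less_iff)
  finally show ?thesis by simp
qed

end

section \<open>Regularly varying tails\<close>

locale regularly_varying_tail = prob_space +
  fixes R :: "'a \<Rightarrow> real" and \<kappa> :: real
  assumes R_measurable [measurable]: "R \<in> borel_measurable M"
    and index_pos: "0 < \<kappa>"
    and tail_scaling: "\<And>c. 0 < c \<Longrightarrow> ((\<lambda>x. upper_tail R (c * x) / upper_tail R x) \<longlongrightarrow> c powr -\<kappa>) at_top"
begin

abbreviation T :: "real \<Rightarrow> real" where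
  "T \<equiv> upper_tail R"

lemma tail_pos: "eventually (\<lambda>x. 0 < T x) at_top"
proof -
  have "eventually (\<lambda>x. 1/2 < T (1 * x) / T x) at_top"
    using tail_scaling[of 1] by (intro order_tendstoD(1)) auto
  then show ?thesis
  proof (rule eventually_mono)
    fix x assume "1/2 < T (1 * x) / T x"
    \<comment> \<open>as \<open>T x / 0 = 0\<close>, the ratio being near 1 forces \<open>T x \<noteq> 0\<close>\<close>
    then have "T x \<noteq> 0" by auto
    then show "0 < T x" using measure_nonneg[of M] by (simp add: order_less_le)
  qed
qed

definition tail_asymp :: "('a \<Rightarrow> real) \<Rightarrow> real \<Rightarrow> bool" where
  "tail_asymp Y a \<longleftrightarrow> ((\<lambda>x. upper_tail Y x / T x) \<longlongrightarrow> a) at_top"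

lemma tail_asymp_rescaled:
  assumes "tail_asymp Y a" "0 < c"
  shows "((\<lambda>x. upper_tail Y (c * x) / T x) \<longlongrightarrow> a * c powr -\<kappa>) at_top"
proof -
  have c_at_top: "filterlim (\<lambda>x. c * x) at_top at_top"
    using \<open>0 < c\<close> by (intro filterlim_tendsto_pos_mult_at_top[OF tendsto_const _ filterlim_ident])
  have "((\<lambda>x. upper_tail Y (c * x) / T (c * x)) \<longlongrightarrow> a) at_top"
    using filterlim_compose[OF assms(1)[unfolded tail_asymp_def] c_at_top] by (simp add: o_def)
  then have "((\<lambda>x. upper_tail Y (c * x) / T (c * x) * (T (c * x) / T x)) \<longlongrightarrow> a * c powr -\<kappa>) at_top"
    using \<open>0 < c\<close> by (intro tendsto_mult tail_scaling)
  moreover have "eventually (\<lambda>x. 0 < T (c * x)) at_top"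
    using filterlim_iff[THEN iffD1, OF c_at_top] tail_pos by blast
  then have "eventually (\<lambda>x. upper_tail Y (c * x) / T (c * x) * (T (c * x) / T x) = upper_tail Y (c * x) / T x) at_top"
    by eventually_elim simp
  ultimately show ?thesis by (rule Lim_transform_eventually)
qed

lemma tail_asymp_reference: "tail_asymp R 1"
  unfolding tail_asymp_def
  by (rule Lim_transform_eventually[OF tendsto_const]) (use tail_pos in \<open>auto elim: eventually_mono\<close>)

lemma tail_asymp_nonpos:
  assumes "\<And>\<omega>. Y \<omega> \<le> 0"
  shows "tail_asymp Y 0"
proof -
  have "upper_tail Y x = 0" if "0 \<le> x" for x
  proof -
    have "\<not> x < Y \<omega>" for \<omega> using assms[of \<omega>] that by linarith
    then show ?thesis by simp
  qed
  then show ?thesis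
    unfolding tail_asymp_def
    by (intro Lim_transform_eventually[OF tendsto_const] eventually_mono[OF eventually_ge_at_top[of 0]]) simp
qed

lemma tail_asymp_cmult:
  assumes "tail_asymp Y a" "0 \<le> c"
  shows "tail_asymp (\<lambda>\<omega>. c * Y \<omega>) (c powr \<kappa> * a)"
proof (cases "c = 0")
  case True
  then show ?thesis using tail_asymp_nonpos[of "\<lambda>\<omega>. c * Y \<omega>"] by simp
next
  case False
  with \<open>0 \<le> c\<close> have "0 < c" by simp
  have tail_eq: "upper_tail (\<lambda>\<omega>. c * Y \<omega>) x = upper_tail Y ((1/c) * x)" for x
    using \<open>0 < c\<close> by (intro arg_cong[where f = prob]) (auto simp: field_simps)
  have limit_eq: "c powr \<kappa> * a = a * (1/c) powr -\<kappa>"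
    using \<open>0 < c\<close> by (simp add: powr_minus_divide powr_divide)
  show ?thesis
    unfolding tail_asymp_def tail_eq limit_eq using tail_asymp_rescaled[OF assms(1), of "1/c"] \<open>0 < c\<close> by simp
qed

lemma tail_asymp_add_negligible:
  assumes [measurable]: "Y \<in> borel_measurable M" "E \<in> borel_measurable M"
    and Y: "tail_asymp Y a" and E: "tail_asymp (\<lambda>\<omega>. \<bar>E \<omega>\<bar>) 0"
  shows "tail_asymp (\<lambda>\<omega>. Y \<omega> + E \<omega>) a"
  unfolding tail_asymp_def
proof (rule tendsto_sandwich_approx[where u = "\<lambda>\<epsilon>. a * (1 - \<epsilon>) powr -\<kappa>" and d = "\<lambda>\<epsilon>. a * (1 + \<epsilon>) powr -\<kappa>"])
  fix \<epsilon> :: real assume "0 < \<epsilon>" "\<epsilon> < 1"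
  define U where "U x = upper_tail Y ((1 - \<epsilon>) * x) / T x + upper_tail (\<lambda>\<omega>. \<bar>E \<omega>\<bar>) (\<epsilon> * x) / T x" for x
  define D where "D x = upper_tail Y ((1 + \<epsilon>) * x) / T x - upper_tail (\<lambda>\<omega>. \<bar>E \<omega>\<bar>) (\<epsilon> * x) / T x" for x
  have "(U \<longlongrightarrow> a * (1 - \<epsilon>) powr -\<kappa> + 0 * \<epsilon> powr -\<kappa>) at_top"
    unfolding U_def using \<open>0 < \<epsilon>\<close> \<open>\<epsilon> < 1\<close> by (intro tendsto_add tail_asymp_rescaled Y E) auto
  moreover have "(D \<longlongrightarrow> a * (1 + \<epsilon>) powr -\<kappa> - 0 * \<epsilon> powr -\<kappa>) at_top"
    unfolding D_def using \<open>0 < \<epsilon>\<close> by (intro tendsto_diff tail_asymp_rescaled Y E) auto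
  moreover have "eventually (\<lambda>x. D x \<le> upper_tail (\<lambda>\<omega>. Y \<omega> + E \<omega>) x / T x
      \<and> upper_tail (\<lambda>\<omega>. Y \<omega> + E \<omega>) x / T x \<le> U x) at_top"
    using tail_pos
  proof eventually_elim
    case (elim x)
    have "upper_tail (\<lambda>\<omega>. Y \<omega> + E \<omega>) x \<le> upper_tail Y ((1 - \<epsilon>) * x) + upper_tail (\<lambda>\<omega>. \<bar>E \<omega>\<bar>) (\<epsilon> * x)"
      by (rule prob_subset_Un_le) (auto simp: algebra_simps)
    moreover have "upper_tail Y ((1 + \<epsilon>) * x) \<le> upper_tail (\<lambda>\<omega>. Y \<omega> + E \<omega>) x + upper_tail (\<lambda>\<omega>. \<bar>E \<omega>\<bar>) (\<epsilon> * x)"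
      by (rule prob_subset_Un_le) (auto simp: algebra_simps)
    ultimately show ?case using elim unfolding U_def D_def
      by (simp add: diff_divide_distrib[symmetric] add_divide_distrib[symmetric] divide_right_mono)
  qed
  ultimately show "\<exists>U D. (U \<longlongrightarrow> a * (1 - \<epsilon>) powr -\<kappa>) at_top \<and> (D \<longlongrightarrow> a * (1 + \<epsilon>) powr -\<kappa>) at_top
      \<and> eventually (\<lambda>x. D x \<le> upper_tail (\<lambda>\<omega>. Y \<omega> + E \<omega>) x / T x
        \<and> upper_tail (\<lambda>\<omega>. Y \<omega> + E \<omega>) x / T x \<le> U x) at_top"
    by auto
qed (auto intro!: tendsto_eq_intros)

lemma tail_asymp_add_indep:
  assumes [measurable]: "V \<in> borel_measurable M" "W \<in> borel_measurable M"
    and indep: "indep_var borel V borel W" and nonneg: "\<And>\<omega>. 0 \<le> V \<omega>" "\<And>\<omega>. 0 \<le> W \<omega>"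
    and V: "tail_asymp V a" and W: "tail_asymp W b"
  shows "tail_asymp (\<lambda>\<omega>. V \<omega> + W \<omega>) (a + b)"
  unfolding tail_asymp_def
proof (rule tendsto_sandwich_approx[where u = "\<lambda>\<epsilon>. (a + b) * (1 - \<epsilon>) powr -\<kappa>" and d = "\<lambda>_. a + b"])
  fix \<epsilon> :: real assume "0 < \<epsilon>" "\<epsilon> < 1"
  define U where "U x = upper_tail V ((1 - \<epsilon>) * x) / T x + upper_tail W ((1 - \<epsilon>) * x) / T x
    + upper_tail V (\<epsilon> * x) / T x * upper_tail W (\<epsilon> * x)" for x
  define D where "D x = upper_tail V x / T x + upper_tail W x / T x - upper_tail V x / T x * upper_tail W x" for x
  have "filterlim (\<lambda>x. \<epsilon> * x) at_top at_top"
    using \<open>0 < \<epsilon>\<close> by (intro filterlim_tendsto_pos_mult_at_top[OF tendsto_const _ filterlim_ident])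
  from filterlim_compose[OF upper_tail_tendsto_0 this]
  have "((\<lambda>x. upper_tail W (\<epsilon> * x)) \<longlongrightarrow> 0) at_top" by (simp add: o_def)
  then have "(U \<longlongrightarrow> a * (1 - \<epsilon>) powr -\<kappa> + b * (1 - \<epsilon>) powr -\<kappa> + a * \<epsilon> powr -\<kappa> * 0) at_top"
    unfolding U_def using \<open>0 < \<epsilon>\<close> \<open>\<epsilon> < 1\<close> by (intro tendsto_add tendsto_mult tail_asymp_rescaled V W) auto
  then have "(U \<longlongrightarrow> (a + b) * (1 - \<epsilon>) powr -\<kappa>) at_top"
    by (simp add: distrib_right)
  moreover have "(D \<longlongrightarrow> a + b - a * 0) at_top"
    unfolding D_def using V W unfolding tail_asymp_def
    by (intro tendsto_diff tendsto_add tendsto_mult upper_tail_tendsto_0) auto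
  moreover have "eventually (\<lambda>x. D x \<le> upper_tail (\<lambda>\<omega>. V \<omega> + W \<omega>) x / T x
      \<and> upper_tail (\<lambda>\<omega>. V \<omega> + W \<omega>) x / T x \<le> U x) at_top"
    using tail_pos
  proof eventually_elim
    case (elim x)
    have "D x = (upper_tail V x + upper_tail W x - upper_tail V x * upper_tail W x) / T x"
      "U x = (upper_tail V ((1 - \<epsilon>) * x) + upper_tail W ((1 - \<epsilon>) * x) + upper_tail V (\<epsilon> * x) * upper_tail W (\<epsilon> * x)) / T x"
      unfolding U_def D_def using elim by (auto simp: field_simps)
    then show ?case
      using elim upper_tail_add_le[OF _ _ indep, of x \<epsilon>] upper_tail_add_ge[OF _ _ indep nonneg, of x]
      by (simp add: divide_right_mono)
  qed
  ultimately show "\<exists>U D. (U \<longlongrightarrow> (a + b) * (1 - \<epsilon>) powr -\<kappa>) at_top \<and> (D \<longlongrightarrow> a + b) at_top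
      \<and> eventually (\<lambda>x. D x \<le> upper_tail (\<lambda>\<omega>. V \<omega> + W \<omega>) x / T x
        \<and> upper_tail (\<lambda>\<omega>. V \<omega> + W \<omega>) x / T x \<le> U x) at_top"
    by auto
qed (auto intro!: tendsto_eq_intros)

lemma truncated_moment_le_if_doubling:
  fixes N :: "'a \<Rightarrow> nat"
  assumes [measurable]: "N \<in> measurable M (count_space UNIV)" and "0 \<le> p" "\<rho> < 2 powr p"
    and y1: "\<And>y. y1 \<le> y \<Longrightarrow>
      upper_tail (\<lambda>\<omega>. real (N \<omega>)) (y/2) \<le> C1 * T y \<and> T (y/2) \<le> \<rho> * T y \<and> 0 < T y"
  shows "\<exists>C y0. 0 < y0 \<and> (\<forall>y \<ge> y0. truncated_moment N p y \<le> C * y powr p * T y)"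
proof -
  let ?h = "truncated_moment N p"
  define y0 where "y0 = max y1 1"
  have "0 < y0" "y1 \<le> y0" by (auto simp: y0_def)
  have T_2y0: "0 < y0 powr p * T (2 * y0)" using y1[of "2 * y0"] \<open>0 < y0\<close> \<open>y1 \<le> y0\<close> by simp
  have den: "0 < 1 - \<rho> / 2 powr p" using \<open>\<rho> < 2 powr p\<close> by simp
  define C where "C = max (?h (2 * y0) / (y0 powr p * T (2 * y0))) (C1 / (1 - \<rho> / 2 powr p))"
  have C_base: "?h (2 * y0) \<le> C * (y0 powr p * T (2 * y0))"
    using T_2y0 by (simp add: C_def flip: pos_divide_le_eq)
  have C_step: "C1 \<le> C * (1 - \<rho> / 2 powr p)"
    using den by (simp add: C_def flip: pos_divide_le_eq)
  have "0 \<le> C"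
    unfolding C_def using T_2y0 by (intro max.coboundedI1 divide_nonneg_pos truncated_moment_nonneg)
  have "?h y \<le> C * y powr p * T y" if "y0 \<le> y" for y
    using \<open>0 < y0\<close> that
  proof (induction rule: real_doubling_induct)
    case (base y)
    have "?h y \<le> ?h (2 * y0)" using base by (intro truncated_moment_mono) auto
    also have "\<dots> \<le> C * (y0 powr p * T (2 * y0))" by (rule C_base)
    also have "\<dots> \<le> C * (y powr p * T y)"
      using base \<open>0 < y0\<close> \<open>0 \<le> C\<close> \<open>0 \<le> p\<close>
      by (intro mult_left_mono mult_mono powr_mono2 upper_tail_antimono) auto
    finally show ?case by (simp add: mult.assoc)
  next
    case (double y)
    then have "y1 \<le> y" "0 < y" using \<open>0 < y0\<close> \<open>y1 \<le> y0\<close> by auto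
    note y = y1[OF \<open>y1 \<le> y\<close>]
    have "?h y \<le> ?h (y/2) + y powr p * upper_tail (\<lambda>\<omega>. real (N \<omega>)) (y/2)"
      using \<open>0 < y\<close> \<open>0 \<le> p\<close> by (intro truncated_moment_doubling) auto
    also have "\<dots> \<le> C * (y/2) powr p * (\<rho> * T y) + y powr p * (C1 * T y)"
      using double.IH y \<open>0 \<le> C\<close> by (intro add_mono order.trans[OF double.IH] mult_left_mono) auto
    also have "\<dots> = y powr p * T y * (C * \<rho> / 2 powr p + C1)"
      using \<open>0 < y\<close> by (simp add: powr_divide field_simps)
    also have "\<dots> \<le> y powr p * T y * C"
      using C_step y by (intro mult_left_mono) (auto simp: field_simps)
    finally show ?case by (simp add: mult_ac)
  qed
  then show ?thesis using \<open>0 < y0\<close> by blast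
qed

lemma truncated_moment_le:
  fixes N :: "'a \<Rightarrow> nat"
  assumes [measurable]: "N \<in> measurable M (count_space UNIV)"
    and N: "tail_asymp (\<lambda>\<omega>. real (N \<omega>)) a" and "\<kappa> < p"
  shows "\<exists>C y0. 0 < y0 \<and> (\<forall>y \<ge> y0. truncated_moment N p y \<le> C * y powr p * T y)"
proof -
  \<comment> \<open>\<open>T(y/2) / T(y) \<longrightarrow> 2\<^bsup>\<kappa>\<^esup> < 2\<^bsup>p\<^esup>\<close> is what makes the doubling recursion for the truncated moment close\<close>
  define \<rho> where "\<rho> = (2 powr \<kappa> + 2 powr p) / 2"
  have \<rho>: "2 powr \<kappa> < \<rho>" "\<rho> < 2 powr p" using \<open>\<kappa> < p\<close> by (auto simp: \<rho>_def)
  define C1 where "C1 = a * (1/2) powr -\<kappa> + 1"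
  have "eventually (\<lambda>y. upper_tail (\<lambda>\<omega>. real (N \<omega>)) ((1/2) * y) / T y < C1) at_top"
    using tail_asymp_rescaled[OF N, of "1/2"] unfolding C1_def by (intro order_tendstoD(2)) auto
  moreover have "eventually (\<lambda>y. T ((1/2) * y) / T y < \<rho>) at_top"
    using tail_scaling[of "1/2"] \<rho>(1) by (intro order_tendstoD(2)) (auto simp: powr_minus_divide powr_divide)
  ultimately have "eventually (\<lambda>y. upper_tail (\<lambda>\<omega>. real (N \<omega>)) (y/2) \<le> C1 * T y \<and> T (y/2) \<le> \<rho> * T y \<and> 0 < T y) at_top"
    using tail_pos by eventually_elim (auto simp: field_simps)
  then obtain y1 where "\<And>y. y1 \<le> y \<Longrightarrow>
      upper_tail (\<lambda>\<omega>. real (N \<omega>)) (y/2) \<le> C1 * T y \<and> T (y/2) \<le> \<rho> * T y \<and> 0 < T y"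
    by (auto simp: eventually_at_top_linorder)
  then show ?thesis
    using \<rho>(2) \<open>\<kappa> < p\<close> index_pos by (intro truncated_moment_le_if_doubling) auto
qed

end


section \<open>The branching process with immigration\<close>

definition bpi_index_set :: "(nat \<times> nat + nat) set" where
  "bpi_index_set = {Inl (n, i) | n i. 1 \<le> n \<and> 1 \<le> i} \<union> {Inr n | n. 1 \<le> n}"

definition bpi_family :: "(nat \<Rightarrow> nat \<Rightarrow> 'a \<Rightarrow> nat) \<Rightarrow> (nat \<Rightarrow> 'a \<Rightarrow> nat) \<Rightarrow> nat \<times> nat + nat \<Rightarrow> 'a \<Rightarrow> nat" where
  "bpi_family \<xi> \<eta> j = (case j of Inl (n, i) \<Rightarrow> \<xi> n i | Inr n \<Rightarrow> \<eta> n)"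

definition bpi_indices_upto :: "nat \<Rightarrow> (nat \<times> nat + nat) set" where
  "bpi_indices_upto n = {Inl (k, i) | k i. 1 \<le> k \<and> k \<le> n \<and> 1 \<le> i} \<union> {Inr k | k. 1 \<le> k \<and> k \<le> n}"

text \<open>\<open>X\<^sub>n\<close> as a function of the whole family of offspring and immigration counts, which makes it
  a measurable function on a product space.\<close>
definition bpi_of_family :: "nat \<Rightarrow> (nat \<times> nat + nat \<Rightarrow> nat) \<Rightarrow> nat" where
  "bpi_of_family n f = bpi (\<lambda>k i f. f (Inl (k, i))) (\<lambda>k f. f (Inr k)) n f"

lemma bpi_of_family_0 [simp]: "bpi_of_family 0 f = 0"
  by (simp add: bpi_of_family_def)

lemma bpi_of_family_Suc:
  "bpi_of_family (Suc n) f = (\<Sum>i=1..bpi_of_family n f. f (Inl (Suc n, i))) + f (Inr (Suc n))"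
  by (simp add: bpi_of_family_def)

lemma bpi_eq_bpi_of_family: "bpi \<xi> \<eta> n \<omega> = bpi_of_family n (\<lambda>j. bpi_family \<xi> \<eta> j \<omega>)"
  by (induction n) (simp_all add: bpi_of_family_def bpi_family_def)

lemma bpi_indices_upto_mono: "m \<le> n \<Longrightarrow> bpi_indices_upto m \<subseteq> bpi_indices_upto n"
  by (auto simp: bpi_indices_upto_def)

lemma bpi_indices_upto_subset: "bpi_indices_upto n \<subseteq> bpi_index_set"
  by (auto simp: bpi_indices_upto_def bpi_index_set_def)

lemma bpi_of_family_restrict:
  "bpi_indices_upto n \<subseteq> A \<Longrightarrow> bpi_of_family n (restrict f A) = bpi_of_family n f"
proof (induction n)
  case (Suc n)
  have "bpi_indices_upto n \<subseteq> A" using Suc.prems bpi_indices_upto_mono[of n "Suc n"] by auto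
  then have IH: "bpi_of_family n (restrict f A) = bpi_of_family n f" by (rule Suc.IH)
  moreover have "Inl (Suc n, i) \<in> A" if "1 \<le> i" for i
    using Suc.prems that by (auto simp: bpi_indices_upto_def)
  moreover have "Inr (Suc n) \<in> A" using Suc.prems by (auto simp: bpi_indices_upto_def)
  ultimately show ?case unfolding bpi_of_family_Suc IH by simp
qed simp

lemma measurable_bpi_of_family:
  "bpi_indices_upto n \<subseteq> A \<Longrightarrow> bpi_of_family n \<in> measurable (PiM A (\<lambda>_. count_space UNIV)) (count_space UNIV)"
proof (induction n)
  case (Suc n)
  have IH: "bpi_of_family n \<in> measurable (PiM A (\<lambda>_. count_space UNIV)) (count_space UNIV)"
    using Suc bpi_indices_upto_mono[of n "Suc n"] by auto
  have coord [measurable]: "(\<lambda>f. real (f j)) \<in> borel_measurable (PiM A (\<lambda>_. count_space UNIV))" if "j \<in> A" for j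
    using measurable_component_singleton[OF that, of "\<lambda>_. count_space UNIV"] by measurable
  have "(\<lambda>f. (\<Sum>i=1..k. f (Inl (Suc n, i))) + f (Inr (Suc n)))
      \<in> measurable (PiM A (\<lambda>_. count_space UNIV)) (count_space (UNIV :: nat set))" for k
  proof (rule measurable_real_imp_nat)
    have "Inl (Suc n, i) \<in> A" if "1 \<le> i" for i
      using Suc.prems that by (auto simp: bpi_indices_upto_def)
    moreover have "Inr (Suc n) \<in> A" using Suc.prems by (auto simp: bpi_indices_upto_def)
    ultimately show "(\<lambda>f. real ((\<Sum>i=1..k. f (Inl (Suc n, i))) + f (Inr (Suc n))))
        \<in> borel_measurable (PiM A (\<lambda>_. count_space UNIV))"
      unfolding of_nat_add of_nat_sum by (intro borel_measurable_add borel_measurable_sum coord) auto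
  qed
  from measurable_compose_countable[where f = "\<lambda>k f. (\<Sum>i=1..k. f (Inl (Suc n, i))) + f (Inr (Suc n))", OF this IH]
  show ?case by (simp add: bpi_of_family_Suc[abs_def])
next
  case 0
  have "bpi_of_family 0 = (\<lambda>_. 0)" by (simp add: fun_eq_iff)
  then show ?case by simp
qed

text \<open>Linearising \<open>X\<^sub>j \<approx> \<alpha> X\<^sub>j\<^sub>-\<^sub>1 + \<eta>\<^sub>j\<close>, the immigrants \<open>\<eta>\<^sub>k\<close> enter \<open>X\<^sub>j\<close> with weight \<open>\<alpha>\<^bsup>j-k\<^esup>\<close>;
  a weighted sum of independent regularly varying terms has tail constant \<open>\<Sum> weight\<^bsup>\<kappa>\<^esup>\<close>.\<close>
definition bpi_tail_constant :: "(nat \<Rightarrow> real) \<Rightarrow> real \<Rightarrow> real \<Rightarrow> nat \<Rightarrow> real" where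
  "bpi_tail_constant w \<alpha> \<kappa> n = (\<Sum>k=1..n. (\<Sum>j=k..n. w j * \<alpha> ^ (j - k)) powr \<kappa>)"

lemma bpi_tail_constant_Suc:
  "bpi_tail_constant w \<alpha> \<kappa> (Suc n) = bpi_tail_constant (w(n := w n + \<alpha> * w (Suc n))) \<alpha> \<kappa> n + w (Suc n) powr \<kappa>"
proof -
  let ?w' = "w(n := w n + \<alpha> * w (Suc n))"
  have inner: "(\<Sum>j=k..n. ?w' j * \<alpha> ^ (j - k)) = (\<Sum>j=k..Suc n. w j * \<alpha> ^ (j - k))" if "k \<in> {1..n}" for k
  proof -
    have "(\<Sum>j=k..n. ?w' j * \<alpha> ^ (j - k))
        = (\<Sum>j=k..n. w j * \<alpha> ^ (j - k) + (if j = n then \<alpha> * w (Suc n) * \<alpha> ^ (j - k) else 0))"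
      by (intro sum.cong) (auto simp: algebra_simps)
    also have "\<dots> = (\<Sum>j=k..n. w j * \<alpha> ^ (j - k)) + w (Suc n) * \<alpha> ^ (Suc n - k)"
      using that by (simp add: sum.distrib sum.delta' Suc_diff_le mult_ac)
    finally show ?thesis using that by simp
  qed
  have "bpi_tail_constant w \<alpha> \<kappa> (Suc n) = (\<Sum>k=1..n. (\<Sum>j=k..Suc n. w j * \<alpha> ^ (j - k)) powr \<kappa>) + w (Suc n) powr \<kappa>"
    by (simp add: bpi_tail_constant_def)
  also have "(\<Sum>k=1..n. (\<Sum>j=k..Suc n. w j * \<alpha> ^ (j - k)) powr \<kappa>) = bpi_tail_constant ?w' \<alpha> \<kappa> n"
    unfolding bpi_tail_constant_def using inner by (intro sum.cong) auto
  finally show ?thesis .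
qed

lemma bpi_tail_constant_const_1:
  "bpi_tail_constant (\<lambda>_. 1) \<alpha> \<kappa> n = (\<Sum>i=1..n. (\<Sum>m<i. \<alpha> ^ m) powr \<kappa>)"
proof -
  have "(\<Sum>j=n + 1 - i..n. \<alpha> ^ (j - (n + 1 - i))) = (\<Sum>m<i. \<alpha> ^ m)" if "i \<in> {1..n}" for i
    using that
    by (intro sum.reindex_bij_witness[where i = "\<lambda>m. m + (n + 1 - i)" and j = "\<lambda>j. j - (n + 1 - i)"]) auto
  then show ?thesis
    unfolding bpi_tail_constant_def by (subst sum.atLeastAtMost_rev) (auto intro!: sum.cong)
qed

locale bpi_process = prob_space M for M :: "'a measure" +
  fixes \<xi> :: "nat \<Rightarrow> nat \<Rightarrow> 'a \<Rightarrow> nat" and \<eta> :: "nat \<Rightarrow> 'a \<Rightarrow> nat"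
  assumes indep: "indep_vars (\<lambda>_. count_space UNIV) (bpi_family \<xi> \<eta>) bpi_index_set"
    and offspring_distr: "\<And>n i. 1 \<le> n \<Longrightarrow> 1 \<le> i \<Longrightarrow>
      distr M (count_space UNIV) (\<xi> n i) = distr M (count_space UNIV) (\<xi> 1 1)"
    and immigration_distr: "\<And>n. 1 \<le> n \<Longrightarrow>
      distr M (count_space UNIV) (\<eta> n) = distr M (count_space UNIV) (\<eta> 1)"
    and offspring_integrable: "integrable M (\<lambda>\<omega>. real (\<xi> 1 1 \<omega>))"
begin

abbreviation \<alpha> :: real where
  "\<alpha> \<equiv> expectation (\<lambda>\<omega>. real (\<xi> 1 1 \<omega>))"

lemma measurable_bpi_family: "j \<in> bpi_index_set \<Longrightarrow> bpi_family \<xi> \<eta> j \<in> measurable M (count_space UNIV)"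
  using indep unfolding indep_vars_def by blast

lemma measurable_offspring [measurable]: "1 \<le> n \<Longrightarrow> 1 \<le> i \<Longrightarrow> \<xi> n i \<in> measurable M (count_space UNIV)"
  using measurable_bpi_family[of "Inl (n, i)"] by (simp add: bpi_index_set_def bpi_family_def)

lemma measurable_immigration [measurable]: "1 \<le> n \<Longrightarrow> \<eta> n \<in> measurable M (count_space UNIV)"
  using measurable_bpi_family[of "Inr n"] by (simp add: bpi_index_set_def bpi_family_def)

lemma bpi_eq_restrict: "bpi \<xi> \<eta> n \<omega> = bpi_of_family n (restrict (\<lambda>j. bpi_family \<xi> \<eta> j \<omega>) (bpi_indices_upto n))"
  by (simp add: bpi_eq_bpi_of_family bpi_of_family_restrict)

lemma measurable_restrict_bpi_family:
  "A \<subseteq> bpi_index_set \<Longrightarrow> (\<lambda>\<omega>. restrict (\<lambda>j. bpi_family \<xi> \<eta> j \<omega>) A) \<in> measurable M (PiM A (\<lambda>_. count_space UNIV))"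
  by (intro measurable_restrict measurable_bpi_family) auto

lemma measurable_bpi [measurable]: "bpi \<xi> \<eta> n \<in> measurable M (count_space UNIV)"
  using measurable_comp[OF measurable_restrict_bpi_family[OF bpi_indices_upto_subset]
      measurable_bpi_of_family[OF order_refl]]
  by (simp add: o_def bpi_eq_restrict[abs_def])

lemma indep_var_disjoint_blocks:
  fixes f g :: "(nat \<times> nat + nat \<Rightarrow> nat) \<Rightarrow> real"
  assumes "A \<inter> B = {}" "A \<subseteq> bpi_index_set" "B \<subseteq> bpi_index_set"
    and "f \<in> borel_measurable (PiM A (\<lambda>_. count_space UNIV))" "g \<in> borel_measurable (PiM B (\<lambda>_. count_space UNIV))"
  shows "indep_var borel (\<lambda>\<omega>. f (restrict (\<lambda>j. bpi_family \<xi> \<eta> j \<omega>) A))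
    borel (\<lambda>\<omega>. g (restrict (\<lambda>j. bpi_family \<xi> \<eta> j \<omega>) B))"
  using indep_var_compose[OF indep_var_restrict[OF indep assms(1-3)] assms(4,5)] by (simp add: o_def)

lemma indep_bpi_offspring_sum:
  "indep_var borel (\<lambda>\<omega>. real (bpi \<xi> \<eta> n \<omega>)) borel (\<lambda>\<omega>. \<Sum>i=1..k. real (\<xi> (Suc n) i \<omega>))"
proof -
  define B :: "(nat \<times> nat + nat) set" where "B = (\<lambda>i. Inl (Suc n, i)) ` {1..k}"
  have B: "bpi_indices_upto n \<inter> B = {}" "B \<subseteq> bpi_index_set"
    by (auto simp: B_def bpi_indices_upto_def bpi_index_set_def)
  have "(\<lambda>f. real (bpi_of_family n f)) \<in> borel_measurable (PiM (bpi_indices_upto n) (\<lambda>_. count_space UNIV))"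
    using measurable_bpi_of_family[OF order_refl] by measurable
  moreover have "(\<lambda>f. real (f j)) \<in> borel_measurable (PiM B (\<lambda>_. count_space UNIV))" if "j \<in> B" for j
    using measurable_component_singleton[OF that, of "\<lambda>_. count_space UNIV"] by measurable
  then have "(\<lambda>f. \<Sum>i=1..k. real (f (Inl (Suc n, i)))) \<in> borel_measurable (PiM B (\<lambda>_. count_space UNIV))"
    by (intro borel_measurable_sum) (auto simp: B_def)
  ultimately have "indep_var borel (\<lambda>\<omega>. real (bpi_of_family n (restrict (\<lambda>j. bpi_family \<xi> \<eta> j \<omega>) (bpi_indices_upto n))))
      borel (\<lambda>\<omega>. \<Sum>i=1..k. real (restrict (\<lambda>j. bpi_family \<xi> \<eta> j \<omega>) B (Inl (Suc n, i))))"
    by (rule indep_var_disjoint_blocks[OF B(1) bpi_indices_upto_subset B(2)])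
  moreover have "(\<lambda>\<omega>. \<Sum>i=1..k. real (restrict (\<lambda>j. bpi_family \<xi> \<eta> j \<omega>) B (Inl (Suc n, i))))
      = (\<lambda>\<omega>. \<Sum>i=1..k. real (\<xi> (Suc n) i \<omega>))"
    by (auto simp: B_def bpi_family_def intro!: sum.cong)
  ultimately show ?thesis by (simp add: bpi_eq_restrict[symmetric])
qed

lemma prob_bpi_eq_and_offspring_deviation:
  "prob {\<omega> \<in> space M. bpi \<xi> \<eta> n \<omega> = k \<and> t < \<bar>(\<Sum>i=1..k. real (\<xi> (Suc n) i \<omega>)) - \<alpha> * real k\<bar>}
   = prob {\<omega> \<in> space M. bpi \<xi> \<eta> n \<omega> = k} * prob {\<omega> \<in> space M. t < \<bar>(\<Sum>i=1..k. real (\<xi> (Suc n) i \<omega>)) - \<alpha> * real k\<bar>}"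
proof -
  let ?B = "{..< \<alpha> * real k - t} \<union> {\<alpha> * real k + t <..}"
  have "t < \<bar>z - \<alpha> * real k\<bar> \<longleftrightarrow> z \<in> ?B" for z by auto
  moreover have "prob {\<omega> \<in> space M. real (bpi \<xi> \<eta> n \<omega>) \<in> {real k} \<and> (\<Sum>i=1..k. real (\<xi> (Suc n) i \<omega>)) \<in> ?B}
     = prob {\<omega> \<in> space M. real (bpi \<xi> \<eta> n \<omega>) \<in> {real k}} * prob {\<omega> \<in> space M. (\<Sum>i=1..k. real (\<xi> (Suc n) i \<omega>)) \<in> ?B}"
    by (rule indep_var_prob_conj[OF indep_bpi_offspring_sum]) auto
  ultimately show ?thesis by simp
qed

lemma indep_weighted_bpi_sum_immigration:
  "indep_var borel (\<lambda>\<omega>. \<Sum>j=1..n. w j * real (bpi \<xi> \<eta> j \<omega>)) borel (\<lambda>\<omega>. c * real (\<eta> (Suc n) \<omega>))"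
proof -
  define B :: "(nat \<times> nat + nat) set" where "B = {Inr (Suc n)}"
  have B: "bpi_indices_upto n \<inter> B = {}" "B \<subseteq> bpi_index_set"
    by (auto simp: B_def bpi_indices_upto_def bpi_index_set_def)
  have "bpi_of_family j \<in> measurable (PiM (bpi_indices_upto n) (\<lambda>_. count_space UNIV)) (count_space UNIV)"
    if "j \<in> {1..n}" for j
    using that by (intro measurable_bpi_of_family bpi_indices_upto_mono) auto
  then have "(\<lambda>f. \<Sum>j=1..n. w j * real (bpi_of_family j f)) \<in> borel_measurable (PiM (bpi_indices_upto n) (\<lambda>_. count_space UNIV))"
    by measurable
  moreover have "(\<lambda>f. c * real (f (Inr (Suc n)))) \<in> borel_measurable (PiM B (\<lambda>_. count_space UNIV))"
    using measurable_component_singleton[of "Inr (Suc n)" B "\<lambda>_. count_space UNIV"] by (simp add: B_def) measurable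
  ultimately have "indep_var borel (\<lambda>\<omega>. \<Sum>j=1..n. w j * real (bpi_of_family j (restrict (\<lambda>j. bpi_family \<xi> \<eta> j \<omega>) (bpi_indices_upto n))))
      borel (\<lambda>\<omega>. c * real (restrict (\<lambda>j. bpi_family \<xi> \<eta> j \<omega>) B (Inr (Suc n))))"
    by (rule indep_var_disjoint_blocks[OF B(1) bpi_indices_upto_subset B(2)])
  moreover have "(\<lambda>\<omega>. \<Sum>j=1..n. w j * real (bpi_of_family j (restrict (\<lambda>j. bpi_family \<xi> \<eta> j \<omega>) (bpi_indices_upto n))))
      = (\<lambda>\<omega>. \<Sum>j=1..n. w j * real (bpi \<xi> \<eta> j \<omega>))"
    by (auto intro!: sum.cong simp: bpi_eq_bpi_of_family bpi_of_family_restrict bpi_indices_upto_mono)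
  moreover have "(\<lambda>\<omega>. c * real (restrict (\<lambda>j. bpi_family \<xi> \<eta> j \<omega>) B (Inr (Suc n)))) = (\<lambda>\<omega>. c * real (\<eta> (Suc n) \<omega>))"
    by (auto simp: B_def bpi_family_def)
  ultimately show ?thesis by simp
qed

lemma offspring_distr_real:
  "1 \<le> n \<Longrightarrow> 1 \<le> i \<Longrightarrow> distr M borel (\<lambda>\<omega>. real (\<xi> n i \<omega>)) = distr M borel (\<lambda>\<omega>. real (\<xi> 1 1 \<omega>))"
  using distr_distr[of real "count_space UNIV" borel "\<xi> n i" M] distr_distr[of real "count_space UNIV" borel "\<xi> 1 1" M]
    offspring_distr[of n i] by (simp add: o_def)

lemma upper_tail_immigration:
  assumes "1 \<le> n"
  shows "upper_tail (\<lambda>\<omega>. c * real (\<eta> n \<omega>)) x = upper_tail (\<lambda>\<omega>. c * real (\<eta> 1 \<omega>)) x"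
proof -
  have "upper_tail (\<lambda>\<omega>. c * real (\<eta> k \<omega>)) x = measure (distr M (count_space UNIV) (\<eta> k)) {m. x < c * real m}"
    if "1 \<le> k" for k
    using that by (subst measure_distr) (auto intro!: arg_cong[where f = prob])
  then show ?thesis using assms immigration_distr[OF assms] by simp
qed

lemma offspring_weak_law:
  assumes "1 \<le> g" "0 < \<theta>" "0 < e"
  shows "\<exists>m0. \<forall>m \<ge> m0. prob {\<omega> \<in> space M. \<theta> * real m < \<bar>(\<Sum>i=1..m. real (\<xi> g i \<omega>)) - \<alpha> * real m\<bar>} \<le> e"
proof -
  define I :: "(nat \<times> nat + nat) set" where "I = {Inl (g, i) | i. 1 \<le> i}"
  define X where "X = (\<lambda>j \<omega>. real (bpi_family \<xi> \<eta> j \<omega>))"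
  have "I \<subseteq> bpi_index_set" using \<open>1 \<le> g\<close> by (auto simp: I_def bpi_index_set_def)
  have "indep_vars (\<lambda>_. borel) X I"
    unfolding X_def using indep_vars_subset[OF indep \<open>I \<subseteq> bpi_index_set\<close>]
    by (rule indep_vars_compose2) measurable
  moreover have "distr M borel (X j) = distr M borel (\<lambda>\<omega>. real (\<xi> 1 1 \<omega>))" if j: "j \<in> I" for j
  proof -
    obtain i where "j = Inl (g, i)" "1 \<le> i" using j unfolding I_def by blast
    then show ?thesis using offspring_distr_real[OF \<open>1 \<le> g\<close> \<open>1 \<le> i\<close>] by (simp add: X_def bpi_family_def)
  qed
  ultimately obtain m0 where m0: "\<And>J. finite J \<Longrightarrow> J \<subseteq> I \<Longrightarrow> m0 \<le> card J \<Longrightarrow>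
      prob {\<omega> \<in> space M. \<theta> * real (card J) < \<bar>(\<Sum>j\<in>J. X j \<omega>) - real (card J) * \<alpha>\<bar>} \<le> e"
    using weak_law_of_large_numbers[of X I "\<lambda>\<omega>. real (\<xi> 1 1 \<omega>)" \<theta> e] offspring_integrable assms by auto
  have "prob {\<omega> \<in> space M. \<theta> * real m < \<bar>(\<Sum>i=1..m. real (\<xi> g i \<omega>)) - \<alpha> * real m\<bar>} \<le> e" if "m0 \<le> m" for m
  proof -
    define J :: "(nat \<times> nat + nat) set" where "J = (\<lambda>i. Inl (g, i)) ` {1..m}"
    have inj: "inj_on (\<lambda>i. Inl (g, i)) {1..m}" by (auto simp: inj_on_def)
    have "card J = m" using card_image[OF inj] by (simp add: J_def)
    moreover have "(\<Sum>j\<in>J. X j \<omega>) = (\<Sum>i=1..m. real (\<xi> g i \<omega>))" for \<omega>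
      using sum.reindex[OF inj, of "\<lambda>j. X j \<omega>"] by (simp add: J_def X_def bpi_family_def)
    moreover have "finite J" "J \<subseteq> I" by (auto simp: J_def I_def)
    ultimately show ?thesis using m0[of J] that by (simp add: mult.commute)
  qed
  then show ?thesis by blast
qed

lemma offspring_sum_tail_le:
  assumes "1 \<le> g" "1 \<le> p" "0 < y" and int: "integrable M (\<lambda>\<omega>. real (\<xi> 1 1 \<omega>) powr p)"
  shows "upper_tail (\<lambda>\<omega>. \<Sum>i=1..m. real (\<xi> g i \<omega>)) y
    \<le> real m powr p * expectation (\<lambda>\<omega>. real (\<xi> 1 1 \<omega>) powr p) / y powr p"
proof -
  have same: "1 \<le> i \<Longrightarrow> integrable M (\<lambda>\<omega>. real (\<xi> g i \<omega>) powr p)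
      \<and> expectation (\<lambda>\<omega>. real (\<xi> g i \<omega>) powr p) = expectation (\<lambda>\<omega>. real (\<xi> 1 1 \<omega>) powr p)" for i
    using distr_eq_imp_integrable_iff[OF offspring_distr_real, of g i "\<lambda>x. x powr p"]
      distr_eq_imp_integral_eq[OF offspring_distr_real, of g i "\<lambda>x. x powr p"] \<open>1 \<le> g\<close> int
    by auto
  have "upper_tail (\<lambda>\<omega>. \<Sum>i=1..m. real (\<xi> g i \<omega>)) y
      \<le> real m powr (p - 1) * (\<Sum>i=1..m. expectation (\<lambda>\<omega>. real (\<xi> g i \<omega>) powr p)) / y powr p"
    using prob_sum_greater_le_moment[of "{1..m}" p y "\<lambda>i \<omega>. real (\<xi> g i \<omega>)"] assms same by auto
  also have "\<dots> = real m powr p * expectation (\<lambda>\<omega>. real (\<xi> 1 1 \<omega>) powr p) / y powr p"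
    using same by (cases "m = 0") (simp_all add: powr_diff)
  finally show ?thesis .
qed

definition offspring_deviation :: "nat \<Rightarrow> 'a \<Rightarrow> real" where
  "offspring_deviation n \<omega> = real (\<Sum>i=1..bpi \<xi> \<eta> n \<omega>. \<xi> (Suc n) i \<omega>) - \<alpha> * real (bpi \<xi> \<eta> n \<omega>)"

lemma bpi_Suc_eq:
  "real (bpi \<xi> \<eta> (Suc n) \<omega>) = \<alpha> * real (bpi \<xi> \<eta> n \<omega>) + real (\<eta> (Suc n) \<omega>) + offspring_deviation n \<omega>"
  by (simp add: offspring_deviation_def)

lemma measurable_offspring_deviation [measurable]: "offspring_deviation n \<in> borel_measurable M"
  unfolding offspring_deviation_def[abs_def] by measurable

lemma upper_tail_offspring_deviation_le_sum:
  "upper_tail (\<lambda>\<omega>. \<bar>offspring_deviation n \<omega>\<bar>) t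
   \<le> upper_tail (\<lambda>\<omega>. real (bpi \<xi> \<eta> n \<omega>)) y
     + (\<Sum>k\<in>{0..nat \<lfloor>y\<rfloor>}. prob {\<omega> \<in> space M. bpi \<xi> \<eta> n \<omega> = k}
         * prob {\<omega> \<in> space M. t < \<bar>(\<Sum>i=1..k. real (\<xi> (Suc n) i \<omega>)) - \<alpha> * real k\<bar>})"
proof -
  let ?N = "bpi \<xi> \<eta> n"
  let ?A = "\<lambda>k. {\<omega> \<in> space M. ?N \<omega> = k \<and> t < \<bar>(\<Sum>i=1..k. real (\<xi> (Suc n) i \<omega>)) - \<alpha> * real k\<bar>}"
  have "{\<omega> \<in> space M. t < \<bar>offspring_deviation n \<omega>\<bar>}
      \<subseteq> {\<omega> \<in> space M. y < real (?N \<omega>)} \<union> (\<Union>k\<in>{0..nat \<lfloor>y\<rfloor>}. ?A k)"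
  proof safe
    fix \<omega> assume "\<omega> \<in> space M" "t < \<bar>offspring_deviation n \<omega>\<bar>" "\<omega> \<notin> (\<Union>k\<in>{0..nat \<lfloor>y\<rfloor>}. ?A k)"
    then have "\<not> ?N \<omega> \<le> nat \<lfloor>y\<rfloor>" by (auto simp: offspring_deviation_def of_nat_sum)
    then show "y < real (?N \<omega>)" using le_nat_floor[of "?N \<omega>" y] by linarith
  qed
  then have "upper_tail (\<lambda>\<omega>. \<bar>offspring_deviation n \<omega>\<bar>) t
      \<le> upper_tail (\<lambda>\<omega>. real (?N \<omega>)) y + prob (\<Union>k\<in>{0..nat \<lfloor>y\<rfloor>}. ?A k)"
    by (rule prob_subset_Un_le) auto
  also have "prob (\<Union>k\<in>{0..nat \<lfloor>y\<rfloor>}. ?A k) \<le> (\<Sum>k\<in>{0..nat \<lfloor>y\<rfloor>}. prob (?A k))"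
    by (rule measure_UNION_le) auto
  also have "\<dots> = (\<Sum>k\<in>{0..nat \<lfloor>y\<rfloor>}. prob {\<omega> \<in> space M. ?N \<omega> = k}
         * prob {\<omega> \<in> space M. t < \<bar>(\<Sum>i=1..k. real (\<xi> (Suc n) i \<omega>)) - \<alpha> * real k\<bar>})"
    by (simp only: prob_bpi_eq_and_offspring_deviation)
  finally show ?thesis by simp
qed

lemma offspring_deviation_small_sizes_le:
  assumes "1 \<le> p" "0 < t" "0 \<le> y" "\<alpha> * y \<le> t" and int: "integrable M (\<lambda>\<omega>. real (\<xi> 1 1 \<omega>) powr p)"
  shows "(\<Sum>k\<in>{0..nat \<lfloor>y\<rfloor>}. prob {\<omega> \<in> space M. bpi \<xi> \<eta> n \<omega> = k}
         * prob {\<omega> \<in> space M. t < \<bar>(\<Sum>i=1..k. real (\<xi> (Suc n) i \<omega>)) - \<alpha> * real k\<bar>})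
    \<le> expectation (\<lambda>\<omega>. real (\<xi> 1 1 \<omega>) powr p) * truncated_moment (bpi \<xi> \<eta> n) p y / t powr p"
proof -
  let ?Ep = "expectation (\<lambda>\<omega>. real (\<xi> 1 1 \<omega>) powr p)"
  have "0 \<le> \<alpha>" by (intro integral_nonneg_AE) auto
  have "prob {\<omega> \<in> space M. t < \<bar>(\<Sum>i=1..k. real (\<xi> (Suc n) i \<omega>)) - \<alpha> * real k\<bar>}
      \<le> real k powr p * ?Ep / t powr p" if "k \<in> {0..nat \<lfloor>y\<rfloor>}" for k
  proof -
    have "\<alpha> * real k \<le> \<alpha> * y" using that \<open>0 \<le> \<alpha>\<close> \<open>0 \<le> y\<close> by (intro mult_left_mono) (auto simp: le_nat_iff le_floor_iff)
    then have "\<alpha> * real k \<le> t" using assms(4) by linarith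
    have "{\<omega> \<in> space M. t < \<bar>(\<Sum>i=1..k. real (\<xi> (Suc n) i \<omega>)) - \<alpha> * real k\<bar>}
        \<subseteq> {\<omega> \<in> space M. t < (\<Sum>i=1..k. real (\<xi> (Suc n) i \<omega>))}"
    proof safe
      fix \<omega> assume "t < \<bar>(\<Sum>i=1..k. real (\<xi> (Suc n) i \<omega>)) - \<alpha> * real k\<bar>"
      moreover have "0 \<le> (\<Sum>i=1..k. real (\<xi> (Suc n) i \<omega>))" by (intro sum_nonneg) auto
      moreover have "0 \<le> \<alpha> * real k" using \<open>0 \<le> \<alpha>\<close> by simp
      ultimately show "t < (\<Sum>i=1..k. real (\<xi> (Suc n) i \<omega>))" using \<open>\<alpha> * real k \<le> t\<close> by arith
    qed
    then have "prob {\<omega> \<in> space M. t < \<bar>(\<Sum>i=1..k. real (\<xi> (Suc n) i \<omega>)) - \<alpha> * real k\<bar>}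
        \<le> upper_tail (\<lambda>\<omega>. \<Sum>i=1..k. real (\<xi> (Suc n) i \<omega>)) t"
      by (intro finite_measure_mono) auto
    also have "\<dots> \<le> real k powr p * ?Ep / t powr p"
      using assms by (intro offspring_sum_tail_le) auto
    finally show ?thesis .
  qed
  then have "(\<Sum>k\<in>{0..nat \<lfloor>y\<rfloor>}. prob {\<omega> \<in> space M. bpi \<xi> \<eta> n \<omega> = k}
         * prob {\<omega> \<in> space M. t < \<bar>(\<Sum>i=1..k. real (\<xi> (Suc n) i \<omega>)) - \<alpha> * real k\<bar>})
      \<le> (\<Sum>k\<in>{0..nat \<lfloor>y\<rfloor>}. prob {\<omega> \<in> space M. bpi \<xi> \<eta> n \<omega> = k} * (real k powr p * ?Ep / t powr p))"
    by (intro sum_mono mult_left_mono) auto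
  also have "\<dots> = ?Ep * truncated_moment (bpi \<xi> \<eta> n) p y / t powr p"
    by (simp add: truncated_moment_def sum_distrib_left sum_divide_distrib mult_ac)
  finally show ?thesis .
qed

lemma offspring_deviation_large_sizes_le:
  assumes m0: "\<And>m. m0 \<le> m \<Longrightarrow>
      prob {\<omega> \<in> space M. \<theta> * real m < \<bar>(\<Sum>i=1..m. real (\<xi> (Suc n) i \<omega>)) - \<alpha> * real m\<bar>} \<le> e"
    and "real m0 \<le> y" "0 \<le> z" "\<theta> * z \<le> t" "0 \<le> \<theta>"
  shows "(\<Sum>k\<in>{nat \<lfloor>y\<rfloor><..nat \<lfloor>z\<rfloor>}. prob {\<omega> \<in> space M. bpi \<xi> \<eta> n \<omega> = k}
         * prob {\<omega> \<in> space M. t < \<bar>(\<Sum>i=1..k. real (\<xi> (Suc n) i \<omega>)) - \<alpha> * real k\<bar>})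
    \<le> e * upper_tail (\<lambda>\<omega>. real (bpi \<xi> \<eta> n \<omega>)) y"
proof -
  let ?S = "{nat \<lfloor>y\<rfloor><..nat \<lfloor>z\<rfloor>}"
  have "prob {\<omega> \<in> space M. t < \<bar>(\<Sum>i=1..k. real (\<xi> (Suc n) i \<omega>)) - \<alpha> * real k\<bar>} \<le> e" if "k \<in> ?S" for k
  proof -
    have k: "y < real k" "real k \<le> z"
      using that \<open>real m0 \<le> y\<close> \<open>0 \<le> z\<close> by (auto simp: le_nat_iff le_floor_iff nat_less_iff floor_less_iff)
    then have "\<theta> * real k \<le> t" using \<open>\<theta> * z \<le> t\<close> \<open>0 \<le> \<theta>\<close> by (meson mult_left_mono order_trans)
    then have "prob {\<omega> \<in> space M. t < \<bar>(\<Sum>i=1..k. real (\<xi> (Suc n) i \<omega>)) - \<alpha> * real k\<bar>}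
        \<le> prob {\<omega> \<in> space M. \<theta> * real k < \<bar>(\<Sum>i=1..k. real (\<xi> (Suc n) i \<omega>)) - \<alpha> * real k\<bar>}"
      by (intro finite_measure_mono) auto
    also have "\<dots> \<le> e" using k \<open>real m0 \<le> y\<close> by (intro m0) linarith
    finally show ?thesis .
  qed
  then have "(\<Sum>k\<in>?S. prob {\<omega> \<in> space M. bpi \<xi> \<eta> n \<omega> = k}
         * prob {\<omega> \<in> space M. t < \<bar>(\<Sum>i=1..k. real (\<xi> (Suc n) i \<omega>)) - \<alpha> * real k\<bar>})
      \<le> (\<Sum>k\<in>?S. prob {\<omega> \<in> space M. bpi \<xi> \<eta> n \<omega> = k} * e)"
    by (intro sum_mono mult_left_mono) auto
  also have "\<dots> = e * prob {\<omega> \<in> space M. bpi \<xi> \<eta> n \<omega> \<in> ?S}"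
    using sum_prob_eq_prob_in[OF measurable_bpi, of ?S] by (simp add: sum_distrib_left[symmetric] mult.commute)
  also have "\<dots> \<le> e * upper_tail (\<lambda>\<omega>. real (bpi \<xi> \<eta> n \<omega>)) y"
  proof (intro mult_left_mono finite_measure_mono)
    show "0 \<le> e" using m0[of m0] measure_nonneg order_trans by blast
  qed (use \<open>real m0 \<le> y\<close> in \<open>auto simp: nat_less_iff floor_less_iff\<close>)
  finally show ?thesis .
qed

lemma weighted_bpi_sum_Suc:
  "(\<Sum>j=1..Suc n. w j * real (bpi \<xi> \<eta> j \<omega>))
   = (\<Sum>j=1..n. (w(n := w n + \<alpha> * w (Suc n))) j * real (bpi \<xi> \<eta> j \<omega>))
     + w (Suc n) * real (\<eta> (Suc n) \<omega>) + w (Suc n) * offspring_deviation n \<omega>"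
proof -
  have "(\<Sum>j=1..n. (w(n := w n + \<alpha> * w (Suc n))) j * real (bpi \<xi> \<eta> j \<omega>))
      = (\<Sum>j=1..n. w j * real (bpi \<xi> \<eta> j \<omega>)) + \<alpha> * w (Suc n) * real (bpi \<xi> \<eta> n \<omega>)"
  proof (cases "n = 0")
    case False
    have "(\<Sum>j=1..n. (w(n := w n + \<alpha> * w (Suc n))) j * real (bpi \<xi> \<eta> j \<omega>))
        = (\<Sum>j=1..n. w j * real (bpi \<xi> \<eta> j \<omega>) + (if j = n then \<alpha> * w (Suc n) * real (bpi \<xi> \<eta> j \<omega>) else 0))"
      by (intro sum.cong) (auto simp: algebra_simps)
    then show ?thesis using False by (simp add: sum.distrib sum.delta')
  qed simp
  moreover have "(\<Sum>j=1..Suc n. w j * real (bpi \<xi> \<eta> j \<omega>))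
      = (\<Sum>j=1..n. w j * real (bpi \<xi> \<eta> j \<omega>))
        + w (Suc n) * (\<alpha> * real (bpi \<xi> \<eta> n \<omega>) + real (\<eta> (Suc n) \<omega>) + offspring_deviation n \<omega>)"
    unfolding bpi_Suc_eq[symmetric] by (simp del: bpi.simps)
  ultimately show ?thesis by (simp add: algebra_simps)
qed

end

section \<open>Heavy-tailed immigration\<close>

locale bpi_heavy_tailed = bpi_process M \<xi> \<eta> + regularly_varying_tail M "\<lambda>\<omega>. real (\<eta> 1 \<omega>)" \<kappa>
  for M :: "'a measure" and \<xi> \<eta> \<kappa> +
  fixes p :: real
  assumes moment_exponent: "\<kappa> < p" "1 \<le> p"
    and offspring_moment: "integrable M (\<lambda>\<omega>. real (\<xi> 1 1 \<omega>) powr p)"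
begin

lemma tail_asymp_immigration:
  assumes "0 \<le> c" "1 \<le> n"
  shows "tail_asymp (\<lambda>\<omega>. c * real (\<eta> n \<omega>)) (c powr \<kappa>)"
  using tail_asymp_cmult[OF tail_asymp_reference \<open>0 \<le> c\<close>]
  unfolding tail_asymp_def upper_tail_immigration[OF \<open>1 \<le> n\<close>] by simp

lemma offspring_deviation_tail_le:
  assumes moment: "\<And>y. y0 \<le> y \<Longrightarrow> truncated_moment (bpi \<xi> \<eta> n) p y \<le> C * y powr p * T y"
    and \<delta>: "0 < \<delta>" "\<delta> \<le> K" "\<alpha> * \<delta> \<le> 1"
    and m0: "\<And>m. m0 \<le> m \<Longrightarrow>
      prob {\<omega> \<in> space M. (1/K) * real m < \<bar>(\<Sum>i=1..m. real (\<xi> (Suc n) i \<omega>)) - \<alpha> * real m\<bar>} \<le> e"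
    and x: "0 < x" "y0 \<le> \<delta> * x" "real m0 \<le> \<delta> * x"
  shows "upper_tail (\<lambda>\<omega>. \<bar>offspring_deviation n \<omega>\<bar>) x
    \<le> upper_tail (\<lambda>\<omega>. real (bpi \<xi> \<eta> n \<omega>)) (K * x)
      + expectation (\<lambda>\<omega>. real (\<xi> 1 1 \<omega>) powr p) * C * \<delta> powr p * T (\<delta> * x)
      + e * upper_tail (\<lambda>\<omega>. real (bpi \<xi> \<eta> n \<omega>)) (\<delta> * x)"
proof -
  let ?Ep = "expectation (\<lambda>\<omega>. real (\<xi> 1 1 \<omega>) powr p)"
  let ?pq = "\<lambda>k. prob {\<omega> \<in> space M. bpi \<xi> \<eta> n \<omega> = k}
    * prob {\<omega> \<in> space M. x < \<bar>(\<Sum>i=1..k. real (\<xi> (Suc n) i \<omega>)) - \<alpha> * real k\<bar>}"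
  have "nat \<lfloor>\<delta> * x\<rfloor> \<le> nat \<lfloor>K * x\<rfloor>"
    using \<delta> x by (intro nat_mono floor_mono mult_right_mono) auto
  then have "{0..nat \<lfloor>K * x\<rfloor>} = {0..nat \<lfloor>\<delta> * x\<rfloor>} \<union> {nat \<lfloor>\<delta> * x\<rfloor><..nat \<lfloor>K * x\<rfloor>}" by auto
  then have "(\<Sum>k\<in>{0..nat \<lfloor>K * x\<rfloor>}. ?pq k)
      = (\<Sum>k\<in>{0..nat \<lfloor>\<delta> * x\<rfloor>}. ?pq k) + (\<Sum>k\<in>{nat \<lfloor>\<delta> * x\<rfloor><..nat \<lfloor>K * x\<rfloor>}. ?pq k)"
    by (simp only:) (rule sum.union_disjoint, auto)
  then have "upper_tail (\<lambda>\<omega>. \<bar>offspring_deviation n \<omega>\<bar>) x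
      \<le> upper_tail (\<lambda>\<omega>. real (bpi \<xi> \<eta> n \<omega>)) (K * x)
        + ((\<Sum>k\<in>{0..nat \<lfloor>\<delta> * x\<rfloor>}. ?pq k) + (\<Sum>k\<in>{nat \<lfloor>\<delta> * x\<rfloor><..nat \<lfloor>K * x\<rfloor>}. ?pq k))"
    using upper_tail_offspring_deviation_le_sum[where n = n and t = x and y = "K * x"] by (simp only:)
  also have "(\<Sum>k\<in>{0..nat \<lfloor>\<delta> * x\<rfloor>}. ?pq k) \<le> ?Ep * truncated_moment (bpi \<xi> \<eta> n) p (\<delta> * x) / x powr p"
    using \<delta> x moment_exponent offspring_moment
    by (intro offspring_deviation_small_sizes_le) (auto simp: mult.assoc[symmetric])
  also have "\<dots> \<le> ?Ep * (C * (\<delta> * x) powr p * T (\<delta> * x)) / x powr p"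
    using moment[OF x(2)] x by (intro divide_right_mono mult_left_mono integral_nonneg_AE) auto
  also have "\<dots> = ?Ep * C * \<delta> powr p * T (\<delta> * x)"
    using \<delta> x by (simp add: powr_mult field_simps)
  also have "(\<Sum>k\<in>{nat \<lfloor>\<delta> * x\<rfloor><..nat \<lfloor>K * x\<rfloor>}. ?pq k) \<le> e * upper_tail (\<lambda>\<omega>. real (bpi \<xi> \<eta> n \<omega>)) (\<delta> * x)"
    using \<delta> x by (intro offspring_deviation_large_sizes_le[OF m0]) auto
  finally show ?thesis by (simp only: add.assoc)
qed

lemma offspring_deviation_tail_ratio_le:
  assumes N: "tail_asymp (\<lambda>\<omega>. real (bpi \<xi> \<eta> n \<omega>)) a"
    and moment: "\<And>y. y0 \<le> y \<Longrightarrow> truncated_moment (bpi \<xi> \<eta> n) p y \<le> C * y powr p * T y"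
    and "0 < \<epsilon>" "\<epsilon> < 1"
  shows "\<exists>U. (U \<longlongrightarrow> a * \<epsilon> powr \<kappa> + expectation (\<lambda>\<omega>. real (\<xi> 1 1 \<omega>) powr p) * C * (\<epsilon> / (\<alpha> + 1)) powr (p - \<kappa>) + a * \<epsilon>) at_top
    \<and> eventually (\<lambda>x. 0 \<le> upper_tail (\<lambda>\<omega>. \<bar>offspring_deviation n \<omega>\<bar>) x / T x
      \<and> upper_tail (\<lambda>\<omega>. \<bar>offspring_deviation n \<omega>\<bar>) x / T x \<le> U x) at_top"
proof -
  let ?Ep = "expectation (\<lambda>\<omega>. real (\<xi> 1 1 \<omega>) powr p)"
  let ?PN = "upper_tail (\<lambda>\<omega>. real (bpi \<xi> \<eta> n \<omega>))"
  let ?E = "upper_tail (\<lambda>\<omega>. \<bar>offspring_deviation n \<omega>\<bar>)"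
  \<comment> \<open>\<open>\<delta>\<close> meets the side conditions of \<open>offspring_deviation_tail_le\<close>, and \<open>e\<close> is chosen so that
    the weak-law term contributes \<open>e a \<delta>\<^bsup>-\<kappa>\<^esup> = a \<epsilon>\<close>\<close>
  define K where "K = 1 / \<epsilon>"
  define \<delta> where "\<delta> = \<epsilon> / (\<alpha> + 1)"
  define e where "e = \<epsilon> * \<delta> powr \<kappa>"
  have "0 \<le> \<alpha>" by (intro integral_nonneg_AE) auto
  then have "0 < \<alpha> + 1" by linarith
  then have "0 < \<delta>" "(\<alpha> + 1) * \<delta> = \<epsilon>" unfolding \<delta>_def using \<open>0 < \<epsilon>\<close> by simp_all
  then have "\<alpha> * \<delta> + \<delta> = \<epsilon>" "0 \<le> \<alpha> * \<delta>" using \<open>0 \<le> \<alpha>\<close> by (simp_all add: algebra_simps)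
  moreover have "1 \<le> K" using \<open>0 < \<epsilon>\<close> \<open>\<epsilon> < 1\<close> by (simp add: K_def)
  ultimately have \<delta>: "0 < \<delta>" "\<delta> \<le> K" "\<alpha> * \<delta> \<le> 1"
    using \<open>0 < \<delta>\<close> \<open>\<epsilon> < 1\<close> by linarith+
  then have "0 < e" using \<open>0 < \<epsilon>\<close> by (simp add: e_def)
  then obtain m0 where m0: "\<And>m. m0 \<le> m \<Longrightarrow>
      prob {\<omega> \<in> space M. (1/K) * real m < \<bar>(\<Sum>i=1..m. real (\<xi> (Suc n) i \<omega>)) - \<alpha> * real m\<bar>} \<le> e"
    using offspring_weak_law[of "Suc n" "1/K" e] \<open>0 < \<epsilon>\<close> by (auto simp: K_def)
  define U where "U x = ?PN (K * x) / T x + ?Ep * C * \<delta> powr p * (T (\<delta> * x) / T x) + e * (?PN (\<delta> * x) / T x)" for x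
  have "(U \<longlongrightarrow> a * K powr -\<kappa> + ?Ep * C * \<delta> powr p * \<delta> powr -\<kappa> + e * (a * \<delta> powr -\<kappa>)) at_top"
    unfolding U_def using \<delta> \<open>0 < \<epsilon>\<close>
    by (intro tendsto_add tendsto_mult tendsto_const tail_asymp_rescaled[OF N] tail_scaling) (auto simp: K_def)
  moreover have "a * K powr -\<kappa> + ?Ep * C * \<delta> powr p * \<delta> powr -\<kappa> + e * (a * \<delta> powr -\<kappa>)
      = a * \<epsilon> powr \<kappa> + ?Ep * C * (\<epsilon> / (\<alpha> + 1)) powr (p - \<kappa>) + a * \<epsilon>"
  proof -
    have eq1: "a * K powr -\<kappa> = a * \<epsilon> powr \<kappa>"
      unfolding K_def using \<open>0 < \<epsilon>\<close> by (simp add: powr_minus_divide powr_divide)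
    have eq2: "?Ep * C * \<delta> powr p * \<delta> powr -\<kappa> = ?Ep * C * \<delta> powr (p - \<kappa>)"
      by (simp add: mult.assoc flip: powr_add)
    have eq3: "e * (a * \<delta> powr -\<kappa>) = a * \<epsilon>"
      unfolding e_def using \<open>0 < \<delta>\<close> by (simp add: powr_minus field_simps)
    show ?thesis unfolding eq1 eq2 eq3 \<delta>_def[symmetric] ..
  qed
  moreover have "eventually (\<lambda>x. 0 \<le> ?E x / T x \<and> ?E x / T x \<le> U x) at_top"
    using tail_pos eventually_ge_at_top[of "max 1 (max (y0 / \<delta>) (real m0 / \<delta>))"]
  proof eventually_elim
    case (elim x)
    then have "0 < x" "y0 \<le> \<delta> * x" "real m0 \<le> \<delta> * x"
      using \<delta>(1) by (auto simp: field_simps)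
    from offspring_deviation_tail_le[OF moment \<delta> m0 this]
    have "?E x / T x \<le> (?PN (K * x) + ?Ep * C * \<delta> powr p * T (\<delta> * x) + e * ?PN (\<delta> * x)) / T x"
      using elim by (intro divide_right_mono) auto
    then show ?case by (simp add: U_def add_divide_distrib)
  qed
  ultimately show ?thesis by auto
qed

lemma offspring_deviation_negligible:
  assumes N: "tail_asymp (\<lambda>\<omega>. real (bpi \<xi> \<eta> n \<omega>)) a"
  shows "tail_asymp (\<lambda>\<omega>. \<bar>offspring_deviation n \<omega>\<bar>) 0"
proof -
  let ?Ep = "expectation (\<lambda>\<omega>. real (\<xi> 1 1 \<omega>) powr p)"
  obtain C y0 where moment: "\<And>y. y0 \<le> y \<Longrightarrow> truncated_moment (bpi \<xi> \<eta> n) p y \<le> C * y powr p * T y"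
    using truncated_moment_le[OF measurable_bpi N moment_exponent(1)] by blast
  have "0 \<le> \<alpha>" by (intro integral_nonneg_AE) auto
  then have "0 < \<alpha> + 1" by linarith
  show ?thesis
    unfolding tail_asymp_def
  proof (rule tendsto_sandwich_approx[where d = "\<lambda>_. 0"])
    show "\<exists>U D. (U \<longlongrightarrow> a * \<epsilon> powr \<kappa> + ?Ep * C * (\<epsilon> / (\<alpha> + 1)) powr (p - \<kappa>) + a * \<epsilon>) at_top
        \<and> (D \<longlongrightarrow> 0) at_top
        \<and> eventually (\<lambda>x. D x \<le> upper_tail (\<lambda>\<omega>. \<bar>offspring_deviation n \<omega>\<bar>) x / T x
          \<and> upper_tail (\<lambda>\<omega>. \<bar>offspring_deviation n \<omega>\<bar>) x / T x \<le> U x) at_top"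
      if "0 < \<epsilon>" "\<epsilon> < 1" for \<epsilon>
      using offspring_deviation_tail_ratio_le[OF N moment that] by blast
    have "eventually (\<lambda>\<epsilon>. 0 \<le> \<epsilon> / (\<alpha> + 1)) (at_right (0::real))"
      using \<open>0 < \<alpha> + 1\<close> by (intro eventually_at_rightI[of 0 1]) auto
    moreover have "((\<lambda>\<epsilon>::real. \<epsilon> / (\<alpha> + 1)) \<longlongrightarrow> 0) (at_right 0)"
      by (rule tendsto_divide_zero[OF tendsto_ident_at])
    ultimately have "((\<lambda>\<epsilon>. (\<epsilon> / (\<alpha> + 1)) powr (p - \<kappa>)) \<longlongrightarrow> 0) (at_right 0)"
      using moment_exponent by (auto intro!: tendsto_zero_powrI)
    moreover have "((\<lambda>\<epsilon>::real. \<epsilon> powr \<kappa>) \<longlongrightarrow> 0) (at_right 0)"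
      using index_pos by (intro tendsto_zero_powrI[of "\<lambda>\<epsilon>. \<epsilon>"]) (auto intro: tendsto_ident_at eventually_at_rightI[of 0 1])
    ultimately have "((\<lambda>\<epsilon>. a * \<epsilon> powr \<kappa> + ?Ep * C * (\<epsilon> / (\<alpha> + 1)) powr (p - \<kappa>) + a * \<epsilon>)
        \<longlongrightarrow> a * 0 + ?Ep * C * 0 + a * 0) (at_right 0)"
      by (intro tendsto_add tendsto_mult tendsto_const tendsto_ident_at) auto
    then show "((\<lambda>\<epsilon>. a * \<epsilon> powr \<kappa> + ?Ep * C * (\<epsilon> / (\<alpha> + 1)) powr (p - \<kappa>) + a * \<epsilon>) \<longlongrightarrow> 0) (at_right 0)"
      by simp
  qed simp
qed

theorem tail_asymp_weighted_bpi_sum: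
  assumes "\<And>j. 0 \<le> w j"
  shows "tail_asymp (\<lambda>\<omega>. \<Sum>j=1..n. w j * real (bpi \<xi> \<eta> j \<omega>)) (bpi_tail_constant w \<alpha> \<kappa> n)"
  using assms
proof (induction n arbitrary: w)
  case 0
  have "tail_asymp (\<lambda>\<omega>. 0) 0" by (rule tail_asymp_nonpos) simp
  then show ?case by (simp add: bpi_tail_constant_def)
next
  case (Suc n)
  define c where "c = w (Suc n)"
  define w' where "w' = w(n := w n + \<alpha> * c)"
  have "0 \<le> \<alpha>" by (intro integral_nonneg_AE) auto
  then have "0 \<le> c" "\<And>j. 0 \<le> w' j" using Suc.prems by (auto simp: c_def w'_def)
  define V where "V \<omega> = (\<Sum>j=1..n. w' j * real (bpi \<xi> \<eta> j \<omega>))" for \<omega>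
  have [measurable]: "V \<in> borel_measurable M" unfolding V_def by measurable
  have VW: "tail_asymp (\<lambda>\<omega>. V \<omega> + c * real (\<eta> (Suc n) \<omega>)) (bpi_tail_constant w' \<alpha> \<kappa> n + c powr \<kappa>)"
  proof (rule tail_asymp_add_indep)
    show "tail_asymp V (bpi_tail_constant w' \<alpha> \<kappa> n)"
      unfolding V_def using Suc.IH \<open>\<And>j. 0 \<le> w' j\<close> .
    show "tail_asymp (\<lambda>\<omega>. c * real (\<eta> (Suc n) \<omega>)) (c powr \<kappa>)"
      using \<open>0 \<le> c\<close> by (intro tail_asymp_immigration) auto
    show "indep_var borel V borel (\<lambda>\<omega>. c * real (\<eta> (Suc n) \<omega>))"
      unfolding V_def by (rule indep_weighted_bpi_sum_immigration)
  qed (use \<open>0 \<le> c\<close> \<open>\<And>j. 0 \<le> w' j\<close> in \<open>auto simp: V_def intro!: sum_nonneg\<close>)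
  have E: "tail_asymp (\<lambda>\<omega>. \<bar>c * offspring_deviation n \<omega>\<bar>) 0"
  proof -
    have "{1..n} \<inter> {j. j = n} = (if n = 0 then {} else {n})" by auto
    then have "tail_asymp (\<lambda>\<omega>. real (bpi \<xi> \<eta> n \<omega>)) (bpi_tail_constant (\<lambda>j. of_bool (j = n)) \<alpha> \<kappa> n)"
      using Suc.IH[of "\<lambda>j. of_bool (j = n)"] by (cases "n = 0") simp_all
    then have "tail_asymp (\<lambda>\<omega>. \<bar>offspring_deviation n \<omega>\<bar>) 0"
      by (rule offspring_deviation_negligible)
    from tail_asymp_cmult[OF this \<open>0 \<le> c\<close>] show ?thesis
      using \<open>0 \<le> c\<close> by (simp add: abs_mult)
  qed
  have "tail_asymp (\<lambda>\<omega>. (V \<omega> + c * real (\<eta> (Suc n) \<omega>)) + c * offspring_deviation n \<omega>)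
      (bpi_tail_constant w' \<alpha> \<kappa> n + c powr \<kappa>)"
    by (rule tail_asymp_add_negligible[OF _ _ VW E]) measurable
  then show ?case
    unfolding weighted_bpi_sum_Suc bpi_tail_constant_Suc V_def w'_def c_def .
qed

end

theorem proposition4p1:
  fixes M :: "'a measure"
    and \<xi> :: "nat \<Rightarrow> nat \<Rightarrow> 'a \<Rightarrow> nat"
    and \<eta> :: "nat \<Rightarrow> 'a \<Rightarrow> nat"
    and \<kappa> :: real
  assumes "prob_space M"
    and indep: "prob_space.indep_vars M (\<lambda>_. count_space UNIV)
          (\<lambda>j. case j of Inl (n, i) \<Rightarrow> \<xi> n i | Inr n \<Rightarrow> \<eta> n)
          ({Inl (n, i) | n i. n \<ge> 1 \<and> i \<ge> 1} \<union> {Inr n | n. n \<ge> 1})"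
    and xi_id: "\<And>n i. n \<ge> 1 \<Longrightarrow> i \<ge> 1 \<Longrightarrow>
          distr M (count_space UNIV) (\<xi> n i) = distr M (count_space UNIV) (\<xi> 1 1)"
    and eta_id: "\<And>n. n \<ge> 1 \<Longrightarrow>
          distr M (count_space UNIV) (\<eta> n) = distr M (count_space UNIV) (\<eta> 1)"
    and eta_nondeg: "measure M {\<omega> \<in> space M. \<eta> 1 \<omega> = 0} < 1"
    and alpha_pos: "0 < prob_space.expectation M (\<lambda>\<omega>. real (\<xi> 1 1 \<omega>))"
    and alpha_lt1: "prob_space.expectation M (\<lambda>\<omega>. real (\<xi> 1 1 \<omega>)) < 1"
    and kappa_pos: "\<kappa> > 0"
    and tail: "\<exists>L. slowly_varying L \<and>
          (\<forall>x>0. measure M {\<omega> \<in> space M. real (\<eta> 1 \<omega>) > x} = x powr (-\<kappa>) * L x)"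
    and moment: "\<kappa> \<ge> 1 \<Longrightarrow> \<exists>\<delta>>0. integrable M (\<lambda>\<omega>. real (\<xi> 1 1 \<omega>) powr (\<kappa> + \<delta>))"
  shows "\<forall>n\<ge>1.
    ((\<lambda>x. measure M {\<omega> \<in> space M. real (bpi_sum \<xi> \<eta> n \<omega>) > x}
          / measure M {\<omega> \<in> space M. real (\<eta> 1 \<omega>) > x})
     \<longlongrightarrow> (\<Sum>i=1..n. (\<Sum>m<i. (prob_space.expectation M (\<lambda>\<omega>. real (\<xi> 1 1 \<omega>))) ^ m) powr \<kappa>)) at_top"
proof -
  interpret prob_space M by fact
  have int_xi: "integrable M (\<lambda>\<omega>. real (\<xi> 1 1 \<omega>))"
    using alpha_pos not_integrable_integral_eq[of M "\<lambda>\<omega>. real (\<xi> 1 1 \<omega>)"] by auto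
  obtain p where p: "\<kappa> < p" "1 \<le> p" "integrable M (\<lambda>\<omega>. real (\<xi> 1 1 \<omega>) powr p)"
    using moment_exponent_exists[OF int_xi _ moment] by auto
  obtain L where L: "slowly_varying L" "\<And>x. 0 < x \<Longrightarrow> upper_tail (\<lambda>\<omega>. real (\<eta> 1 \<omega>)) x = x powr -\<kappa> * L x"
    using tail by blast
  interpret bpi_process M \<xi> \<eta>
  proof
    show "indep_vars (\<lambda>_. count_space UNIV) (bpi_family \<xi> \<eta>) bpi_index_set"
      using indep by (simp add: bpi_family_def[abs_def] bpi_index_set_def)
  qed (fact xi_id eta_id int_xi)+
  interpret bpi_heavy_tailed M \<xi> \<eta> \<kappa> p
  proof
    show "(\<lambda>\<omega>. real (\<eta> 1 \<omega>)) \<in> borel_measurable M" by measurable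
    show "((\<lambda>x. upper_tail (\<lambda>\<omega>. real (\<eta> 1 \<omega>)) (c * x) / upper_tail (\<lambda>\<omega>. real (\<eta> 1 \<omega>)) x) \<longlongrightarrow> c powr -\<kappa>) at_top"
      if "0 < c" for c
      using slowly_varying_powr_mult_scaling[OF L that] .
  qed (fact kappa_pos p)+
  have "tail_asymp (\<lambda>\<omega>. real (bpi_sum \<xi> \<eta> n \<omega>)) (\<Sum>i=1..n. (\<Sum>m<i. \<alpha> ^ m) powr \<kappa>)" for n
    using tail_asymp_weighted_bpi_sum[of "\<lambda>_. 1" n] by (simp add: bpi_sum_def bpi_tail_constant_const_1)
  then show ?thesis unfolding tail_asymp_def by blast
qed

end
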